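(* Let $A\ge6$ be an integer, let $R'_A$ be the quasi-regular hexagon of largest area among those with area at most $A$, and let $k=A-\|R'_A\|$. Then the minimum of the edge-perimeter $p(P)$ over all polyiamonds $P$ with $\|P\|=A$ equals $$p(R'_A)+\mathbb 1_{\{k>0\}}+\mathbb 1_{\{k>0,\ k\text{ even}\}},$$ and this minimum is attained by the (standard) polyiamond obtained by attaching to $R'_A$ an incomplete bar of $k$ faces along the side where the next quasi-regular hexagon in the area ordering is obtained.
   Context: Faces are the closed triangular faces of the triangular lattice $\mathbb T^2$ in $\mathbb R^2$. A polyiamond $P$ is a finite nonempty union of faces that is connected through shared edges (two faces sharing only a vertex are not adjacent); faces not in $P$ are empty faces. Its area $\|P\|$ is the number of its faces; its edge-perimeter $p(P)$ is the number of edges of $\mathbb T^2$ separating a face of $P$ from an empty face; its site-perimeter $s(P)$ is the number of empty faces sharing at least one edge with a face of $P$. For integers $d\ge1$, $a,b,c\ge0$ with $a+b,b+c,c+a\le d$, $T^d_{a,b,c}$ is the polyiamond obtained from an equilateral triangle of side length $d$ with sides on lattice lines (the union of its $d^2$ faces) by removing the equilateral sub-triangles of side lengths $a,b,c$ at its three corners; its boundary is a (possibly degenerate) hexagon with side lengths, in cyclic order, $a,\ d-a-b,\ b,\ d-b-c,\ c,\ d-c-a$, its area is $d^2-a^2-b^2-c^2$ and its edge- and site-perimeter equal $3d-a-b-c$. Quasi-regular hexagons: for $r\ge1$ let $E(r)=T^{3r}_{r,r,r}$ (regular hexagon of side $r$), $E_{B_1}(r)=T^{3r}_{r-1,r,r}$,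 $E_{B_2}(r)=T^{3r+1}_{r,r,r+1}$, $E_{B_3}(r)=T^{3r+1}_{r,r,r}$, $E_{B_4}(r)=T^{3r+2}_{r,r+1,r+1}$, $E_{B_5}(r)=T^{3r+2}_{r,r,r+1}$ (equivalently, $E_{B_i}(r)$ arises from $E(r)$ by successively attaching $i$ complete rows, called bars, of $2r-1$, $2r+1,\dots$ faces along sides, and attaching a further bar of $2r+3$ faces to $E_{B_5}(r)$ gives $E(r+1)$). Their areas are $6r^2,\ 6r^2+2r-1,\ 6r^2+4r,\ 6r^2+6r+1,\ 6r^2+8r+2,\ 6r^2+10r+3$, and their edge-perimeters are $6r,6r+1,\dots,6r+5$. A quasi-regular hexagon is any image of one of these under a symmetry (translation, rotation, reflection) of $\mathbb T^2$; $\mathcal Q$ denotes the set of all quasi-regular hexagons. Ordered by area, the quasi-regular hexagons $E(1),E_{B_1}(1),\dots,E_{B_5}(1),E(2),\dots$ have strictly increasing areas and edge-perimeters $6,7,8,\dots$. An incomplete bar is an edge-connected proper subset of the bar attached to pass from one quasi-regular hexagon to the next. *)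

theory Defs
  imports Main
begin

text \<open>Vertices of the triangular lattice in the lattice basis e1 = (1,0), e2 = (1/2, sqrt 3/2):
  the point (x,y) stands for x e1 + y e2.  A face is represented by its set of three vertices.\<close>

type_synonym vertex = "int \<times> int"
type_synonym face = "vertex set"

definition up_face :: "vertex \<Rightarrow> face" where
  "up_face v = (case v of (i, j) \<Rightarrow> {(i, j), (i + 1, j), (i, j + 1)})"

definition down_face :: "vertex \<Rightarrow> face" where
  "down_face v = (case v of (i, j) \<Rightarrow> {(i + 1, j), (i, j + 1), (i + 1, j + 1)})"

definition faces :: "face set" where
  "faces = range up_face \<union> range down_face"

definition lattice_edges :: "vertex set set" where
  "lattice_edges = {e. card e = 2 \<and> (\<exists>F\<in>faces. e \<subseteq> F)}"

definition adjacent :: "face \<Rightarrow> face \<Rightarrow> bool" where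
  "adjacent F G \<longleftrightarrow> F \<in> faces \<and> G \<in> faces \<and> F \<noteq> G \<and>
     (\<exists>e\<in>lattice_edges. e \<subseteq> F \<and> e \<subseteq> G)"

definition edge_connected :: "face set \<Rightarrow> bool" where
  "edge_connected S \<longleftrightarrow>
     (\<forall>F\<in>S. \<forall>G\<in>S. (\<lambda>X Y. X \<in> S \<and> Y \<in> S \<and> adjacent X Y)\<^sup>*\<^sup>* F G)"

definition polyiamond :: "face set \<Rightarrow> bool" where
  "polyiamond P \<longleftrightarrow> P \<subseteq> faces \<and> finite P \<and> P \<noteq> {} \<and> edge_connected P"

definition area :: "face set \<Rightarrow> nat" where
  "area P = card P"

definition edge_perimeter :: "face set \<Rightarrow> nat" where
  "edge_perimeter P = card {e \<in> lattice_edges.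
      \<exists>F\<in>P. \<exists>G\<in>faces. G \<notin> P \<and> e \<subseteq> F \<and> e \<subseteq> G}"

text \<open>T^d_{a,b,c}: big triangle with corners (0,0), (d,0), (0,d), minus the corner triangles
  of sides a (at (0,0)), b (at (d,0)), c (at (0,d)).  A face lies in a closed region iff all
  of its vertices do.\<close>
definition tri_hex :: "nat \<Rightarrow> nat \<Rightarrow> nat \<Rightarrow> nat \<Rightarrow> face set" where
  "tri_hex d a b c =
     {F \<in> faces. (\<forall>(x, y)\<in>F. 0 \<le> x \<and> 0 \<le> y \<and> x + y \<le> int d)
        \<and> \<not> (\<forall>(x, y)\<in>F. x + y \<le> int a)
        \<and> \<not> (\<forall>(x, y)\<in>F. x \<ge> int d - int b)
        \<and> \<not> (\<forall>(x, y)\<in>F. y \<ge> int d - int c)}"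

text \<open>The quasi-regular hexagons E(r), E_{B_1}(r), ..., E_{B_5}(r).\<close>
definition qhex :: "nat \<Rightarrow> nat \<Rightarrow> face set" where
  "qhex r i =
     (if i = 0 then tri_hex (3*r) r r r
      else if i = 1 then tri_hex (3*r) (r - 1) r r
      else if i = 2 then tri_hex (3*r + 1) r r (r + 1)
      else if i = 3 then tri_hex (3*r + 1) r r r
      else if i = 4 then tri_hex (3*r + 2) r (r + 1) (r + 1)
      else tri_hex (3*r + 2) r r (r + 1))"

definition qh_seq :: "nat \<Rightarrow> face set" where
  "qh_seq n = qhex (n div 6 + 1) (n mod 6)"

definition rot60 :: "vertex \<Rightarrow> vertex" where
  "rot60 v = (case v of (x, y) \<Rightarrow> (- y, x + y))"

definition refl_lat :: "vertex \<Rightarrow> vertex" where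
  "refl_lat v = (case v of (x, y) \<Rightarrow> (y, x))"

definition lattice_sym :: "(vertex \<Rightarrow> vertex) \<Rightarrow> bool" where
  "lattice_sym g \<longleftrightarrow> (\<exists>k::nat. \<exists>m::nat. \<exists>tx ty. k < 6 \<and> m < 2 \<and>
      g = (\<lambda>v. case (rot60 ^^ k) ((refl_lat ^^ m) v) of (x, y) \<Rightarrow> (x + tx, y + ty)))"

definition sym_image :: "(vertex \<Rightarrow> vertex) \<Rightarrow> face set \<Rightarrow> face set" where
  "sym_image g S = (\<lambda>F. g ` F) ` S"

end

theory Submission
  imports Defs
begin

text \<open>Code each face by the indices (X, Y, S) of the three lattice strips containing it; two faces
  are adjacent iff they share two of their strips. Every strip met by a polyiamond P has a boundary
  edge at either end and every boundary edge lies in strips of two directions, so p(P) is at least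
  the number of strips met by P. If P is connected these strips cut out a hexagon containing P,
  whose area is at most a sixth of the square of its strip count; hence 6 area(P) \<le> p(P)^2.
  Adding a face changes p by 3 - 2 (number of its neighbours), so p(P) and area(P) have the same
  parity. The n-th quasi-regular hexagon has perimeter n + 6 and an area so close to (n + 6)^2 / 6
  that these two facts give the lower bound. Conversely, the next quasi-regular hexagon arises,
  up to a symmetry, by attaching a bar face by face, and an incomplete bar of k faces raises the
  perimeter by 1 for odd k and by 2 for even k.\<close>

section \<open>Strip coordinates of faces\<close>

type_synonym tri = "int \<times> int \<times> int"

text \<open>The triple (X, Y, S) codes the face lying in the three lattice strips
  X \<le> x \<le> X + 1, Y \<le> y \<le> Y + 1 and S \<le> x + y \<le> S + 1; such a face exists iff
  S = X + Y (an up-face) or S = X + Y + 1 (a down-face).\<close>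

definition valid_tri :: "tri \<Rightarrow> bool" where
  "valid_tri f \<longleftrightarrow> (case f of (X, Y, S) \<Rightarrow> S = X + Y \<or> S = X + Y + 1)"

fun strip_x :: "tri \<Rightarrow> int" where "strip_x (X, _, _) = X"
fun strip_y :: "tri \<Rightarrow> int" where "strip_y (_, Y, _) = Y"
fun strip_s :: "tri \<Rightarrow> int" where "strip_s (_, _, S) = S"

definition face_of :: "tri \<Rightarrow> face" where
  "face_of f = (case f of (X, Y, S) \<Rightarrow> if S = X + Y then up_face (X, Y) else down_face (X, Y))"

definition tri_nbrs :: "tri \<Rightarrow> tri set" where
  "tri_nbrs f = (case f of (X, Y, S) \<Rightarrow>
     if S = X + Y then {(X, Y, S + 1), (X, Y - 1, S), (X - 1, Y, S)}
     else {(X, Y, S - 1), (X, Y + 1, S), (X + 1, Y, S)})"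

definition tri_adj :: "tri \<Rightarrow> tri \<Rightarrow> bool" where
  "tri_adj f g \<longleftrightarrow> valid_tri f \<and> g \<in> tri_nbrs f"

lemma valid_triE:
  assumes "valid_tri f"
  obtains X Y where "f = (X, Y, X + Y)" | X Y where "f = (X, Y, X + Y + 1)"
  using assms by (cases f) (auto simp: valid_tri_def)

lemma valid_tri_up [simp]: "valid_tri (X, Y, X + Y)"
  and valid_tri_down [simp]: "valid_tri (X, Y, X + Y + 1)"
  by (auto simp: valid_tri_def)

lemma face_of_up: "S = X + Y \<Longrightarrow> face_of (X, Y, S) = {(X, Y), (X + 1, Y), (X, Y + 1)}"
  and face_of_down: "S = X + Y + 1 \<Longrightarrow> face_of (X, Y, S) = {(X + 1, Y), (X, Y + 1), (X + 1, Y + 1)}"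
  by (simp_all add: face_of_def up_face_def down_face_def)

lemma mem_face_of:
  "valid_tri (X, Y, S) \<Longrightarrow> (x, y) \<in> face_of (X, Y, S) \<longleftrightarrow>
     X \<le> x \<and> x \<le> X + 1 \<and> Y \<le> y \<and> y \<le> Y + 1 \<and> S \<le> x + y \<and> x + y \<le> S + 1"
  by (auto simp: valid_tri_def face_of_up face_of_down)

lemma tri_adj_sym: "tri_adj f g \<longleftrightarrow> tri_adj g f"
  by (cases f; cases g) (auto simp: tri_adj_def tri_nbrs_def valid_tri_def split: if_splits)

lemma tri_adj_iff:
  "tri_adj f g \<longleftrightarrow> valid_tri f \<and> valid_tri g \<and> f \<noteq> g \<and>
     (strip_x f = strip_x g \<and> strip_y f = strip_y g \<or> strip_x f = strip_x g \<and> strip_s f = strip_s g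
      \<or> strip_y f = strip_y g \<and> strip_s f = strip_s g)"
  by (cases f; cases g) (auto simp: tri_adj_def tri_nbrs_def valid_tri_def split: if_splits)

lemma tri_adj_valid: "tri_adj f g \<Longrightarrow> valid_tri f \<and> valid_tri g"
  and tri_adj_neq: "tri_adj f g \<Longrightarrow> f \<noteq> g"
  by (simp_all add: tri_adj_iff)

lemma horizontal_edge_tris:
  "valid_tri g \<Longrightarrow> (x, y) \<in> face_of g \<Longrightarrow> (x + 1, y) \<in> face_of g \<Longrightarrow>
     g = (x, y, x + y) \<or> g = (x, y - 1, x + y)"
  by (cases g) (auto simp: mem_face_of valid_tri_def)

lemma vertical_edge_tris:
  "valid_tri g \<Longrightarrow> (x, y) \<in> face_of g \<Longrightarrow> (x, y + 1) \<in> face_of g \<Longrightarrow>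
     g = (x, y, x + y) \<or> g = (x - 1, y, x + y)"
  by (cases g) (auto simp: mem_face_of valid_tri_def)

lemma diagonal_edge_tris:
  "valid_tri g \<Longrightarrow> (x + 1, y) \<in> face_of g \<Longrightarrow> (x, y + 1) \<in> face_of g \<Longrightarrow>
     g = (x, y, x + y) \<or> g = (x, y, x + y + 1)"
  by (cases g) (auto simp: mem_face_of valid_tri_def)

lemma face_of_inj:
  assumes "valid_tri f" "valid_tri g" "face_of f = face_of g"
  shows "f = g"
  using assms(1)
proof (cases rule: valid_triE)
  case (1 X Y)
  then have "face_of g = {(X, Y), (X + 1, Y), (X, Y + 1)}"
    using assms(3) by (simp add: face_of_up)
  then show ?thesis
    using horizontal_edge_tris[OF assms(2)] vertical_edge_tris[OF assms(2)] 1 by fastforce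
next
  case (2 X Y)
  then have "face_of g = {(X + 1, Y), (X, Y + 1), (X + 1, Y + 1)}"
    using assms(3) by (simp add: face_of_down)
  then show ?thesis
    using diagonal_edge_tris[OF assms(2)] horizontal_edge_tris[OF assms(2), of X "Y + 1"] 2
    by fastforce
qed

lemma inj_on_face_of: "inj_on face_of {f. valid_tri f}"
  using face_of_inj by (auto simp: inj_on_def)

lemma face_of_image_diff:
  "A \<subseteq> {f. valid_tri f} \<Longrightarrow> B \<subseteq> {f. valid_tri f} \<Longrightarrow> face_of ` (A - B) = face_of ` A - face_of ` B"
  by (rule inj_on_image_set_diff[OF inj_on_face_of]) auto

lemma faces_eq_image_face_of: "faces = face_of ` {f. valid_tri f}"
proof
  have "up_face v = face_of (fst v, snd v, fst v + snd v)"
    "down_face v = face_of (fst v, snd v, fst v + snd v + 1)" for v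
    by (cases v; simp add: face_of_def)+
  then show "faces \<subseteq> face_of ` {f. valid_tri f}"
    unfolding faces_def by (auto intro!: image_eqI)
  show "face_of ` {f. valid_tri f} \<subseteq> faces"
    by (auto simp: faces_def face_of_def valid_tri_def)
qed

lemma face_of_in_faces: "valid_tri f \<Longrightarrow> face_of f \<in> faces"
  using faces_eq_image_face_of by blast

lemma tri_adj_shared_edge:
  assumes "tri_adj f g"
  obtains u w where "u \<noteq> w" "face_of f \<inter> face_of g = {u, w}"
    "\<And>h. valid_tri h \<Longrightarrow> u \<in> face_of h \<Longrightarrow> w \<in> face_of h \<Longrightarrow> h = f \<or> h = g"
proof -
  have g: "g \<in> tri_nbrs f" and f: "valid_tri f"
    using assms by (auto simp: tri_adj_def)
  from f show ?thesis
  proof (cases rule: valid_triE)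
    case (1 X Y)
    then consider "g = (X, Y, X + Y + 1)" | "g = (X, Y - 1, X + Y)" | "g = (X - 1, Y, X + Y)"
      using g by (auto simp: tri_nbrs_def)
    then show ?thesis
    proof cases
      case 1
      then show ?thesis using \<open>f = _\<close> diagonal_edge_tris[of _ X Y]
        by (intro that[of "(X + 1, Y)" "(X, Y + 1)"]) (auto simp: face_of_up face_of_down)
    next
      case 2
      then show ?thesis using \<open>f = _\<close> horizontal_edge_tris[of _ X Y]
        by (intro that[of "(X, Y)" "(X + 1, Y)"]) (auto simp: face_of_up face_of_down)
    next
      case 3
      then show ?thesis using \<open>f = _\<close> vertical_edge_tris[of _ X Y]
        by (intro that[of "(X, Y)" "(X, Y + 1)"]) (auto simp: face_of_up face_of_down)
    qed
  next
    case (2 X Y)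
    then consider "g = (X, Y, X + Y)" | "g = (X, Y + 1, X + Y + 1)" | "g = (X + 1, Y, X + Y + 1)"
      using g by (auto simp: tri_nbrs_def)
    then show ?thesis
    proof cases
      case 1
      then show ?thesis using \<open>f = _\<close> diagonal_edge_tris[of _ X Y]
        by (intro that[of "(X + 1, Y)" "(X, Y + 1)"]) (auto simp: face_of_up face_of_down)
    next
      case 2
      then show ?thesis using \<open>f = _\<close> horizontal_edge_tris[of _ X "Y + 1"]
        by (intro that[of "(X, Y + 1)" "(X + 1, Y + 1)"])
          (auto simp: face_of_up face_of_down algebra_simps)
    next
      case 3
      then show ?thesis using \<open>f = _\<close> vertical_edge_tris[of _ "X + 1" Y]
        by (intro that[of "(X + 1, Y)" "(X + 1, Y + 1)"])
          (auto simp: face_of_up face_of_down algebra_simps)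
    qed
  qed
qed

lemma two_vertices_in_nbr:
  assumes "valid_tri f" "u \<noteq> w" "u \<in> face_of f" "w \<in> face_of f"
  shows "\<exists>g \<in> tri_nbrs f. u \<in> face_of g \<and> w \<in> face_of g"
  using assms(1)
proof (cases rule: valid_triE)
  case (1 X Y)
  then show ?thesis using assms(2-4) by (auto simp: tri_nbrs_def face_of_up face_of_down)
next
  case (2 X Y)
  then show ?thesis using assms(2-4) by (auto simp: tri_nbrs_def face_of_up face_of_down)
qed

lemma lattice_edge_between_tris:
  assumes "valid_tri f" "valid_tri g" "f \<noteq> g" "e \<in> lattice_edges"
    and "e \<subseteq> face_of f" "e \<subseteq> face_of g"
  shows "tri_adj f g \<and> e = face_of f \<inter> face_of g"
proof -
  obtain u w where e: "e = {u, w}" "u \<noteq> w"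
    using assms(4) by (auto simp: lattice_edges_def card_2_iff)
  obtain h where h: "h \<in> tri_nbrs f" "u \<in> face_of h" "w \<in> face_of h"
    using two_vertices_in_nbr[OF assms(1) e(2)] assms(5) e(1) by auto
  have fh: "tri_adj f h"
    using h(1) assms(1) by (simp add: tri_adj_def)
  obtain u' w' where "u' \<noteq> w'" and uw': "face_of f \<inter> face_of h = {u', w'}"
    and only: "\<And>h'. valid_tri h' \<Longrightarrow> u' \<in> face_of h' \<Longrightarrow> w' \<in> face_of h' \<Longrightarrow> h' = f \<or> h' = h"
    using tri_adj_shared_edge[OF fh] by blast
  have "{u, w} = {u', w'}"
    using uw' h assms(5) e by (metis Int_iff doubleton_eq_iff insertE insert_subset singletonD)
  then have "g = h"
    using only[OF assms(2)] assms(3,6) e(1) by (metis doubleton_eq_iff insert_subset)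
  then show ?thesis
    using fh uw' \<open>{u, w} = {u', w'}\<close> e(1) by simp
qed

lemma face_of_inter_in_lattice_edges:
  assumes "tri_adj f g"
  shows "face_of f \<inter> face_of g \<in> lattice_edges"
proof -
  obtain u w where "u \<noteq> w" "face_of f \<inter> face_of g = {u, w}"
    by (rule tri_adj_shared_edge[OF assms])
  moreover have "face_of f \<in> faces"
    using face_of_in_faces tri_adj_valid[OF assms] by blast
  ultimately show ?thesis
    unfolding lattice_edges_def by (intro CollectI conjI bexI[of _ "face_of f"]) auto
qed

lemma tri_adj_edge_determines_pair:
  assumes "tri_adj f g" "tri_adj f' g'" "face_of f \<inter> face_of g = face_of f' \<inter> face_of g'"
  shows "{f', g'} \<subseteq> {f, g}"
proof -
  obtain u w where "u \<noteq> w" "face_of f \<inter> face_of g = {u, w}"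
    and "\<And>h. valid_tri h \<Longrightarrow> u \<in> face_of h \<Longrightarrow> w \<in> face_of h \<Longrightarrow> h = f \<or> h = g"
    using tri_adj_shared_edge[OF assms(1)] by blast
  then show ?thesis
    using assms(3) tri_adj_valid[OF assms(2)] by blast
qed

definition boundary_pairs :: "tri set \<Rightarrow> (tri \<times> tri) set" where
  "boundary_pairs M = {(f, g). f \<in> M \<and> g \<notin> M \<and> tri_adj f g}"

definition tri_perim :: "tri set \<Rightarrow> nat" where
  "tri_perim M = card (boundary_pairs M)"

definition connected_wrt :: "('a \<Rightarrow> 'a \<Rightarrow> bool) \<Rightarrow> 'a set \<Rightarrow> bool" where
  "connected_wrt R M \<longleftrightarrow> (\<forall>f\<in>M. \<forall>g\<in>M. (\<lambda>a b. a \<in> M \<and> b \<in> M \<and> R a b)\<^sup>*\<^sup>* f g)"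

lemma inj_on_boundary_pair_edge: "inj_on (\<lambda>(f, g). face_of f \<inter> face_of g) (boundary_pairs M)"
proof (rule inj_onI)
  fix p q assume "p \<in> boundary_pairs M" "q \<in> boundary_pairs M"
    and eq: "(\<lambda>(f, g). face_of f \<inter> face_of g) p = (\<lambda>(f, g). face_of f \<inter> face_of g) q"
  then obtain f g f' g' where p: "p = (f, g)" "f \<in> M" "g \<notin> M" "tri_adj f g"
    and q: "q = (f', g')" "f' \<in> M" "g' \<notin> M" "tri_adj f' g'"
    by (auto simp: boundary_pairs_def)
  then show "p = q"
    using tri_adj_edge_determines_pair[OF p(4) q(4)] eq by auto
qed

lemma perimeter_edges_face_of:
  assumes M: "M \<subseteq> {f. valid_tri f}"
  shows "{e \<in> lattice_edges. \<exists>F\<in>face_of ` M. \<exists>G\<in>faces. G \<notin> face_of ` M \<and> e \<subseteq> F \<and> e \<subseteq> G}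
    = (\<lambda>(f, g). face_of f \<inter> face_of g) ` boundary_pairs M" (is "?E = _")
proof
  have notin: "face_of g \<notin> face_of ` M \<longleftrightarrow> g \<notin> M" if "valid_tri g" for g
    using face_of_inj[OF _ that] M by blast
  show "(\<lambda>(f, g). face_of f \<inter> face_of g) ` boundary_pairs M \<subseteq> ?E"
  proof
    fix e assume "e \<in> (\<lambda>(f, g). face_of f \<inter> face_of g) ` boundary_pairs M"
    then obtain f g where e: "e = face_of f \<inter> face_of g" "f \<in> M" "g \<notin> M" "tri_adj f g"
      by (auto simp: boundary_pairs_def)
    have "face_of g \<in> faces" "face_of g \<notin> face_of ` M"
      using face_of_in_faces tri_adj_valid[OF e(4)] notin e(3) by auto
    then show "e \<in> ?E"
      using face_of_inter_in_lattice_edges[OF e(4)] e(1,2) by blast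
  qed
  show "?E \<subseteq> (\<lambda>(f, g). face_of f \<inter> face_of g) ` boundary_pairs M"
  proof
    fix e assume "e \<in> ?E"
    then obtain f G where "e \<in> lattice_edges" "f \<in> M" "G \<in> faces" "G \<notin> face_of ` M"
        "e \<subseteq> face_of f" "e \<subseteq> G"
      by blast
    moreover obtain g where "valid_tri g" "G = face_of g"
      using \<open>G \<in> faces\<close> faces_eq_image_face_of by blast
    ultimately have e: "e \<in> lattice_edges" "f \<in> M" "valid_tri g" "face_of g \<notin> face_of ` M"
        "e \<subseteq> face_of f" "e \<subseteq> face_of g"
      by simp_all
    then have "tri_adj f g \<and> e = face_of f \<inter> face_of g"
      using lattice_edge_between_tris[of f g e] M notin by auto
    then show "e \<in> (\<lambda>(f, g). face_of f \<inter> face_of g) ` boundary_pairs M"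
      using e(2,3,4) notin unfolding boundary_pairs_def by (auto intro!: image_eqI[of _ _ "(f, g)"])
  qed
qed

lemma edge_perimeter_face_of:
  "M \<subseteq> {f. valid_tri f} \<Longrightarrow> edge_perimeter (face_of ` M) = tri_perim M"
  unfolding edge_perimeter_def tri_perim_def perimeter_edges_face_of
  by (simp add: card_image inj_on_boundary_pair_edge)

lemma connected_wrt_image:
  assumes "inj_on h M" and "\<And>a b. a \<in> M \<Longrightarrow> b \<in> M \<Longrightarrow> R (h a) (h b) \<longleftrightarrow> R' a b"
  shows "connected_wrt R (h ` M) \<longleftrightarrow> connected_wrt R' M"
proof -
  let ?R = "\<lambda>x y. x \<in> h ` M \<and> y \<in> h ` M \<and> R x y"
  let ?R' = "\<lambda>a b. a \<in> M \<and> b \<in> M \<and> R' a b"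
  have fw: "?R\<^sup>*\<^sup>* (h a) (h b)" if "?R'\<^sup>*\<^sup>* a b" for a b
    using that by induction (auto intro: rtranclp.rtrancl_into_rtrancl simp: assms(2))
  have bw: "\<forall>b\<in>M. y = h b \<longrightarrow> ?R'\<^sup>*\<^sup>* a b" if "?R\<^sup>*\<^sup>* (h a) y" "a \<in> M" for a y
    using that(1)
  proof induction
    case base
    then show ?case using assms(1) that(2) by (auto dest: inj_onD)
  next
    case (step y z)
    then show ?case by (auto intro: rtranclp.rtrancl_into_rtrancl simp: assms(2))
  qed
  show ?thesis
    unfolding connected_wrt_def using fw bw by blast
qed

lemma adjacent_face_of_iff:
  assumes "valid_tri f" "valid_tri g"
  shows "adjacent (face_of f) (face_of g) \<longleftrightarrow> tri_adj f g"
proof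
  assume "adjacent (face_of f) (face_of g)"
  then obtain e where "face_of f \<noteq> face_of g" "e \<in> lattice_edges" "e \<subseteq> face_of f" "e \<subseteq> face_of g"
    by (auto simp: adjacent_def)
  then show "tri_adj f g"
    using lattice_edge_between_tris[OF assms] by blast
next
  assume fg: "tri_adj f g"
  then have "face_of f \<noteq> face_of g"
    using face_of_inj[OF assms] tri_adj_neq by blast
  then show "adjacent (face_of f) (face_of g)"
    using face_of_inter_in_lattice_edges[OF fg] face_of_in_faces assms
    unfolding adjacent_def by blast
qed

lemma edge_connected_face_of:
  "M \<subseteq> {f. valid_tri f} \<Longrightarrow> edge_connected (face_of ` M) \<longleftrightarrow> connected_wrt tri_adj M"
  unfolding edge_connected_def connected_wrt_def[symmetric]
  by (rule connected_wrt_image) (auto intro: inj_on_subset[OF inj_on_face_of] simp: adjacent_face_of_iff subset_iff)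

lemma area_face_of: "M \<subseteq> {f. valid_tri f} \<Longrightarrow> area (face_of ` M) = card M"
  unfolding area_def by (meson card_image inj_on_face_of inj_on_subset)

lemma polyiamond_face_of:
  assumes "M \<subseteq> {f. valid_tri f}"
  shows "polyiamond (face_of ` M) \<longleftrightarrow> finite M \<and> M \<noteq> {} \<and> connected_wrt tri_adj M"
  using assms edge_connected_face_of[OF assms] faces_eq_image_face_of
    finite_image_iff[OF inj_on_subset[OF inj_on_face_of assms]]
  by (auto simp: polyiamond_def)

lemma subset_faces_eq_image:
  assumes "P \<subseteq> faces"
  shows "P = face_of ` {f. valid_tri f \<and> face_of f \<in> P}"
proof
  show "P \<subseteq> face_of ` {f. valid_tri f \<and> face_of f \<in> P}"
  proof
    fix F assume "F \<in> P"
    moreover have "F \<in> face_of ` {f. valid_tri f}"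
      using \<open>F \<in> P\<close> assms faces_eq_image_face_of by auto
    then obtain f where "valid_tri f" "F = face_of f" by blast
    ultimately show "F \<in> face_of ` {f. valid_tri f \<and> face_of f \<in> P}" by blast
  qed
qed auto

lemma finite_tri_nbrs [simp]: "finite (tri_nbrs f)"
  by (cases f) (simp add: tri_nbrs_def)

lemma card_tri_nbrs: "valid_tri f \<Longrightarrow> card (tri_nbrs f) = 3"
  by (cases f) (auto simp: valid_tri_def tri_nbrs_def)

lemma not_in_tri_nbrs: "f \<notin> tri_nbrs f"
  by (cases f) (simp add: tri_nbrs_def)

lemma finite_boundary_pairs: "finite M \<Longrightarrow> finite (boundary_pairs M)"
  by (rule finite_subset[of _ "M \<times> (\<Union>f\<in>M. tri_nbrs f)"]) (auto simp: boundary_pairs_def tri_adj_def)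

lemma tri_perim_empty [simp]: "tri_perim {} = 0"
  by (simp add: tri_perim_def boundary_pairs_def)

text \<open>The new face turns its edges towards M into interior edges and its other edges into
  boundary edges.\<close>
lemma tri_perim_insert:
  assumes M: "finite M" and f: "valid_tri f" "f \<notin> M"
  shows "int (tri_perim (insert f M)) = int (tri_perim M) + 3 - 2 * int (card (tri_nbrs f \<inter> M))"
proof -
  define R where "R = (\<lambda>a. (a, f)) ` (tri_nbrs f \<inter> M)"
  define Q where "Q = (\<lambda>b. (f, b)) ` (tri_nbrs f - M)"
  have adj_f: "tri_adj a f \<longleftrightarrow> a \<in> tri_nbrs f" "tri_adj f a \<longleftrightarrow> a \<in> tri_nbrs f" for a
    using f(1) tri_adj_sym[of a f] by (simp_all add: tri_adj_def)
  have split: "boundary_pairs (insert f M) = (boundary_pairs M - R) \<union> Q"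
    using f adj_f not_in_tri_nbrs[of f] by (auto simp: boundary_pairs_def R_def Q_def)
  have R_sub: "R \<subseteq> boundary_pairs M"
    using f(2) adj_f by (auto simp: boundary_pairs_def R_def)
  have fin: "finite (boundary_pairs M)"
    using finite_boundary_pairs[OF M] .
  have "card R = card (tri_nbrs f \<inter> M)" "card Q = card (tri_nbrs f - M)"
    unfolding R_def Q_def by (simp_all add: card_image inj_on_def)
  moreover have "card (tri_nbrs f \<inter> M) + card (tri_nbrs f - M) = 3"
    using card_tri_nbrs[OF f(1)] card_Int_Diff[of "tri_nbrs f" M] by simp
  moreover have "(boundary_pairs M - R) \<inter> Q = {}"
    using f(2) by (auto simp: boundary_pairs_def Q_def)
  moreover have "card (boundary_pairs M - R) = card (boundary_pairs M) - card R"
    "card R \<le> card (boundary_pairs M)"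
    using R_sub fin by (simp_all add: card_Diff_subset card_mono finite_subset)
  ultimately show ?thesis
    unfolding tri_perim_def split using fin by (simp add: card_Un_disjoint Q_def)
qed

lemma even_tri_perim_add_card:
  "finite M \<Longrightarrow> M \<subseteq> {f. valid_tri f} \<Longrightarrow> even (tri_perim M + card M)"
proof (induction M rule: finite_induct)
  case (insert f M)
  then have "int (tri_perim (insert f M)) = int (tri_perim M) + 3 - 2 * int (card (tri_nbrs f \<inter> M))"
    by (intro tri_perim_insert) auto
  moreover have "even (int (tri_perim M) + int (card M))"
    using insert by (simp flip: of_nat_add)
  ultimately have "even (int (tri_perim (insert f M)) + int (card (insert f M)))"
    using insert by simp
  then show ?case by (simp flip: of_nat_add)
qed simp

lemma connected_wrt_insert:
  assumes "connected_wrt R M" "g \<in> M" "R g f" "R f g"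
  shows "connected_wrt R (insert f M)"
proof -
  let ?R = "\<lambda>a b. a \<in> M \<and> b \<in> M \<and> R a b"
  let ?R' = "\<lambda>a b. a \<in> insert f M \<and> b \<in> insert f M \<and> R a b"
  have lift: "?R'\<^sup>*\<^sup>* a b" if "?R\<^sup>*\<^sup>* a b" for a b
    using that by (rule rtranclp_mono[THEN predicate2D, rotated]) auto
  have to_g: "?R'\<^sup>*\<^sup>* a g" and from_g: "?R'\<^sup>*\<^sup>* g a" if "a \<in> insert f M" for a
    using that assms lift unfolding connected_wrt_def by (auto intro: r_into_rtranclp)
  show ?thesis
    unfolding connected_wrt_def using to_g from_g by (blast intro: rtranclp_trans)
qed

lemma connected_wrt_singleton: "connected_wrt R {f}"
  by (simp add: connected_wrt_def)


lemma connected_wrt_intermediate_value: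
  fixes c :: "'a \<Rightarrow> int"
  assumes "connected_wrt R M" "a \<in> M" "b \<in> M" "c a \<le> v" "v \<le> c b"
    and step: "\<And>x y. R x y \<Longrightarrow> \<bar>c x - c y\<bar> \<le> 1"
  shows "\<exists>z\<in>M. c z = v"
proof -
  have "(\<lambda>x y. x \<in> M \<and> y \<in> M \<and> R x y)\<^sup>*\<^sup>* a b"
    using assms(1-3) unfolding connected_wrt_def by blast
  then have "\<forall>v. c a \<le> v \<longrightarrow> v \<le> c b \<longrightarrow> (\<exists>z\<in>M. c z = v)"
  proof induction
    case base
    then show ?case using assms(2) by force
  next
    case (step y z)
    show ?case
    proof (intro allI impI)
      fix v assume v: "c a \<le> v" "v \<le> c z"
      show "\<exists>z\<in>M. c z = v"
      proof (cases "v \<le> c y")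
        case True
        then show ?thesis using step.IH v by blast
      next
        case False
        moreover have "\<bar>c y - c z\<bar> \<le> 1"
          using step.hyps(2) assms(6) by blast
        ultimately have "v = c z" using v by linarith
        then show ?thesis using step.hyps(2) by blast
      qed
    qed
  qed
  then show ?thesis using assms(4,5) by blast
qed

lemma card_image_ge_range:
  fixes c :: "'a \<Rightarrow> int"
  assumes "finite M" "M \<noteq> {}" "connected_wrt R M" and step: "\<And>x y. R x y \<Longrightarrow> \<bar>c x - c y\<bar> \<le> 1"
  shows "Max (c ` M) - Min (c ` M) + 1 \<le> int (card (c ` M))"
proof -
  have "Min (c ` M) \<in> c ` M" "Max (c ` M) \<in> c ` M"
    using assms(1,2) by simp_all
  then obtain a b where "a \<in> M" "c a = Min (c ` M)" "b \<in> M" "c b = Max (c ` M)"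
    by (metis imageE)
  then have "{Min (c ` M)..Max (c ` M)} \<subseteq> c ` M"
    using connected_wrt_intermediate_value[OF assms(3), of a b c] step by fastforce
  then have "card {Min (c ` M)..Max (c ` M)} \<le> card (c ` M)"
    using assms(1) by (intro card_mono) auto
  moreover have "Min (c ` M) \<le> Max (c ` M)"
    using assms(1,2) by simp
  ultimately show ?thesis by simp
qed

section \<open>Counting strips\<close>

text \<open>The face of largest t in a strip of M has its t-successor outside M.\<close>
lemma strip_has_exit:
  fixes c t :: "tri \<Rightarrow> int"
  assumes "finite M" "v \<in> c ` M" and succ: "\<And>f. f \<in> M \<Longrightarrow> c (sc f) = c f \<and> t (sc f) = t f + 1"
  shows "\<exists>f\<in>M. c f = v \<and> sc f \<notin> M"
proof -
  let ?S = "{f \<in> M. c f = v}"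
  have "finite ?S" "?S \<noteq> {}"
    using assms(1,2) by auto
  then have "Max (t ` ?S) \<in> t ` ?S"
    by simp
  then obtain f where f: "t f = Max (t ` ?S)" "f \<in> ?S"
    by (rule imageE) (rule that, simp_all)
  have "sc f \<notin> M"
  proof
    assume "sc f \<in> M"
    then have "sc f \<in> ?S"
      using succ[of f] f(2) by simp
    then have "t (sc f) \<le> t f"
      unfolding f(1) using \<open>finite ?S\<close> by (intro Max_ge) auto
    then show False
      using succ[of f] f(2) by simp
  qed
  then show ?thesis
    using f(2) by blast
qed

text \<open>Each strip met by M has a boundary pair at either end.\<close>
lemma card_strips_le_boundary:
  fixes c t :: "tri \<Rightarrow> int"
  assumes fin: "finite M" and val: "M \<subseteq> {f. valid_tri f}"
    and up: "\<And>f. valid_tri f \<Longrightarrow> tri_adj f (sc f) \<and> c (sc f) = c f \<and> t (sc f) = t f + 1"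
    and down: "\<And>f. valid_tri f \<Longrightarrow> tri_adj f (pc f) \<and> c (pc f) = c f \<and> t (pc f) = t f - 1"
  shows "2 * card (c ` M) \<le> card {p \<in> boundary_pairs M. c (fst p) = c (snd p)}"
proof -
  let ?E = "{p \<in> boundary_pairs M. c (fst p) = c (snd p)}"
  let ?Eup = "{p \<in> ?E. t (snd p) = t (fst p) + 1}" and ?Edown = "{p \<in> ?E. t (snd p) = t (fst p) - 1}"
  have finE: "finite ?E" and fin_up: "finite ?Eup" and fin_down: "finite ?Edown"
    using finite_boundary_pairs[OF fin] by simp_all
  have "c ` M \<subseteq> (c \<circ> fst) ` ?Eup"
  proof
    fix v assume "v \<in> c ` M"
    then obtain f where "f \<in> M" "c f = v" "sc f \<notin> M"
      using strip_has_exit[OF fin, where c = c and t = t and sc = sc] up val by blast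
    then show "v \<in> (c \<circ> fst) ` ?Eup"
      using up[of f] val by (auto simp: boundary_pairs_def intro!: image_eqI[of _ _ "(f, sc f)"])
  qed
  then have "card (c ` M) \<le> card ?Eup"
    using fin_up by (meson card_image_le card_mono finite_imageI order_trans)
  moreover have "c ` M \<subseteq> (c \<circ> fst) ` ?Edown"
  proof
    fix v assume "v \<in> c ` M"
    have "\<exists>f\<in>M. c f = v \<and> pc f \<notin> M"
      using \<open>v \<in> c ` M\<close> down val by (intro strip_has_exit[OF fin, where t = "\<lambda>f. - t f"]) auto
    then obtain f where "f \<in> M" "c f = v" "pc f \<notin> M"
      by blast
    then show "v \<in> (c \<circ> fst) ` ?Edown"
      using down[of f] val by (auto simp: boundary_pairs_def intro!: image_eqI[of _ _ "(f, pc f)"])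
  qed
  then have "card (c ` M) \<le> card ?Edown"
    using fin_down by (meson card_image_le card_mono finite_imageI order_trans)
  moreover have "card ?Eup + card ?Edown = card (?Eup \<union> ?Edown)"
    using fin_up fin_down by (intro card_Un_disjoint[symmetric]) auto
  moreover have "card (?Eup \<union> ?Edown) \<le> card ?E"
    using finE by (intro card_mono) auto
  ultimately show ?thesis
    by linarith
qed

lemma card_strips_x_le_boundary:
  "finite M \<Longrightarrow> M \<subseteq> {f. valid_tri f} \<Longrightarrow>
     2 * card (strip_x ` M) \<le> card {p \<in> boundary_pairs M. strip_x (fst p) = strip_x (snd p)}"
  by (rule card_strips_le_boundary[where t = "\<lambda>(X, Y, S). Y + S"
      and sc = "\<lambda>(X, Y, S). if S = X + Y then (X, Y, S + 1) else (X, Y + 1, S)"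
      and pc = "\<lambda>(X, Y, S). if S = X + Y then (X, Y - 1, S) else (X, Y, S - 1)"])
    (auto simp: tri_adj_def tri_nbrs_def valid_tri_def)

lemma card_strips_y_le_boundary:
  "finite M \<Longrightarrow> M \<subseteq> {f. valid_tri f} \<Longrightarrow>
     2 * card (strip_y ` M) \<le> card {p \<in> boundary_pairs M. strip_y (fst p) = strip_y (snd p)}"
  by (rule card_strips_le_boundary[where t = "\<lambda>(X, Y, S). X + S"
      and sc = "\<lambda>(X, Y, S). if S = X + Y then (X, Y, S + 1) else (X + 1, Y, S)"
      and pc = "\<lambda>(X, Y, S). if S = X + Y then (X - 1, Y, S) else (X, Y, S - 1)"])
    (auto simp: tri_adj_def tri_nbrs_def valid_tri_def)

lemma card_strips_s_le_boundary:
  "finite M \<Longrightarrow> M \<subseteq> {f. valid_tri f} \<Longrightarrow>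
     2 * card (strip_s ` M) \<le> card {p \<in> boundary_pairs M. strip_s (fst p) = strip_s (snd p)}"
  by (rule card_strips_le_boundary[where t = "\<lambda>(X, Y, S). X - Y"
      and sc = "\<lambda>(X, Y, S). if S = X + Y then (X, Y - 1, S) else (X + 1, Y, S)"
      and pc = "\<lambda>(X, Y, S). if S = X + Y then (X - 1, Y, S) else (X, Y + 1, S)"])
    (auto simp: tri_adj_def tri_nbrs_def valid_tri_def)

lemma tri_adj_two_strips_agree:
  "tri_adj f g \<Longrightarrow>
     of_bool (strip_x f = strip_x g) + of_bool (strip_y f = strip_y g) + of_bool (strip_s f = strip_s g) = (2::nat)"
  by (cases f; cases g) (auto simp: tri_adj_iff)

lemma tri_perim_ge_strips:
  assumes "finite M" "M \<subseteq> {f. valid_tri f}"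
  shows "card (strip_x ` M) + card (strip_y ` M) + card (strip_s ` M) \<le> tri_perim M"
proof -
  have fin: "finite (boundary_pairs M)"
    using finite_boundary_pairs[OF assms(1)] .
  have "card {p \<in> boundary_pairs M. strip_x (fst p) = strip_x (snd p)}
      + card {p \<in> boundary_pairs M. strip_y (fst p) = strip_y (snd p)}
      + card {p \<in> boundary_pairs M. strip_s (fst p) = strip_s (snd p)}
      = (\<Sum>p\<in>boundary_pairs M. (of_bool (strip_x (fst p) = strip_x (snd p)) :: nat)
           + of_bool (strip_y (fst p) = strip_y (snd p)) + of_bool (strip_s (fst p) = strip_s (snd p)))"
    using fin by (simp add: sum.distrib Int_def)
  also have "\<dots> = (\<Sum>p\<in>boundary_pairs M. 2)"
  proof (rule sum.cong[OF refl])
    fix p assume "p \<in> boundary_pairs M"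
    then have "tri_adj (fst p) (snd p)"
      by (auto simp: boundary_pairs_def)
    then show "of_bool (strip_x (fst p) = strip_x (snd p)) + of_bool (strip_y (fst p) = strip_y (snd p))
        + of_bool (strip_s (fst p) = strip_s (snd p)) = (2::nat)"
      by (rule tri_adj_two_strips_agree)
  qed
  finally show ?thesis
    using card_strips_x_le_boundary[OF assms] card_strips_y_le_boundary[OF assms]
      card_strips_s_le_boundary[OF assms]
    by (simp add: tri_perim_def)
qed

section \<open>Hexagons\<close>

lemma image_eq_vimage_inverse:
  assumes "\<And>x. g (h x) = x" "\<And>x. h (g x) = x"
  shows "g ` A = h -` A"
proof
  show "h -` A \<subseteq> g ` A"
  proof
    fix x assume "x \<in> h -` A"
    then show "x \<in> g ` A"
      using assms(1)[of x] by (intro image_eqI[of _ _ "h x"]) auto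
  qed
qed (use assms(2) in auto)

definition hexagon :: "int \<Rightarrow> int \<Rightarrow> int \<Rightarrow> int \<Rightarrow> int \<Rightarrow> int \<Rightarrow> tri set" where
  "hexagon x0 x1 y0 y1 s0 s1 = {f. valid_tri f \<and> x0 \<le> strip_x f \<and> strip_x f < x1
     \<and> y0 \<le> strip_y f \<and> strip_y f < y1 \<and> s0 \<le> strip_s f \<and> strip_s f < s1}"

definition corner_triangle :: "int \<Rightarrow> tri set" where
  "corner_triangle t = {f. valid_tri f \<and> 0 \<le> strip_x f \<and> 0 \<le> strip_y f \<and> strip_s f < t}"

lemma finite_hexagon [simp]: "finite (hexagon x0 x1 y0 y1 s0 s1)"
  by (rule finite_subset[of _ "{x0..x1} \<times> {y0..y1} \<times> {s0..s1}"]) (auto simp: hexagon_def)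

lemma hexagon_valid: "hexagon x0 x1 y0 y1 s0 s1 \<subseteq> {f. valid_tri f}"
  by (auto simp: hexagon_def)

lemma card_corner_triangle_layer:
  assumes "0 \<le> t"
  shows "card {f. valid_tri f \<and> 0 \<le> strip_x f \<and> 0 \<le> strip_y f \<and> strip_s f = t} = nat (2 * t + 1)"
proof -
  have layer: "{f. valid_tri f \<and> 0 \<le> strip_x f \<and> 0 \<le> strip_y f \<and> strip_s f = t}
      = (\<lambda>x. (x, t - x, t)) ` {0..t} \<union> (\<lambda>x. (x, t - 1 - x, t)) ` {0..t - 1}"
    by (auto simp: valid_tri_def image_iff)
  have "card ((\<lambda>x. (x, t - x, t)) ` {0..t}) = nat (t + 1)"
    "card ((\<lambda>x. (x, t - 1 - x, t)) ` {0..t - 1}) = nat t"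
    by (simp_all add: card_image inj_on_def)
  then show ?thesis
    unfolding layer using assms by (subst card_Un_disjoint) auto
qed

lemma card_corner_triangle: "0 \<le> t \<Longrightarrow> int (card (corner_triangle t)) = t * t"
proof (induction t rule: int_ge_induct)
  case base
  have "corner_triangle 0 = {}"
    by (auto simp: corner_triangle_def valid_tri_def)
  then show ?case by simp
next
  case (step t)
  let ?L = "{f. valid_tri f \<and> 0 \<le> strip_x f \<and> 0 \<le> strip_y f \<and> strip_s f = t}"
  have split: "corner_triangle (t + 1) = corner_triangle t \<union> ?L"
    by (auto simp: corner_triangle_def)
  have "finite (corner_triangle t)" "finite ?L"
    by (auto intro: finite_subset[of _ "{0..t} \<times> {0..t} \<times> {0..t}"] simp: corner_triangle_def valid_tri_def)
  then have "card (corner_triangle (t + 1)) = card (corner_triangle t) + nat (2 * t + 1)"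
    unfolding split using card_corner_triangle_layer[OF step.hyps]
    by (subst card_Un_disjoint) (auto simp: corner_triangle_def)
  then show ?case
    using step by (simp add: algebra_simps)
qed

lemma card_parallelogram:
  assumes "0 \<le> n" "0 \<le> m"
  shows "int (card {f. valid_tri f \<and> 0 \<le> strip_x f \<and> strip_x f < n \<and> 0 \<le> strip_y f \<and> strip_y f < m})
    = 2 * n * m"
proof -
  have "{f. valid_tri f \<and> 0 \<le> strip_x f \<and> strip_x f < n \<and> 0 \<le> strip_y f \<and> strip_y f < m}
      = (\<lambda>(x, y, e). (x, y, x + y + e)) ` ({0..<n} \<times> {0..<m} \<times> {0, 1})"
    by (force simp: valid_tri_def image_iff)
  moreover have "inj_on (\<lambda>(x, y, e). (x, y, x + y + e)) ({0..<n} \<times> {0..<m} \<times> {0::int, 1})"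
    by (auto simp: inj_on_def)
  ultimately show ?thesis
    using assms by (simp add: card_image card_cartesian_product)
qed

lemma card_upper_corner:
  assumes "n \<le> d" "m \<le> d"
  shows "card {f. valid_tri f \<and> 0 \<le> strip_x f \<and> strip_x f < n \<and> 0 \<le> strip_y f \<and> strip_y f < m
    \<and> d \<le> strip_s f} = card (corner_triangle (n + m - d))" (is "card ?T = _")
proof -
  let ?r = "\<lambda>(X, Y, S). (n - 1 - X, m - 1 - Y, n + m - 1 - S)"
  have rr: "?r (?r f) = f" for f
    by (cases f) simp
  have "?r ` ?T = corner_triangle (n + m - d)"
    unfolding image_eq_vimage_inverse[of ?r ?r, OF rr rr]
    using assms by (auto simp: corner_triangle_def valid_tri_def)
  moreover have "inj_on ?r ?T"
    by (rule inj_on_inverseI[of _ ?r]) (rule rr)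
  ultimately show ?thesis
    using card_image by fastforce
qed

text \<open>The hexagon is a parallelogram with two corner triangles cut off.\<close>
lemma card_hexagon:
  assumes "0 \<le> a" "a \<le> n" "a \<le> m" "n \<le> d" "m \<le> d" "d \<le> n + m"
  shows "int (card (hexagon 0 n 0 m a d)) = 2 * n * m - a * a - (n + m - d) * (n + m - d)"
proof -
  let ?F = "{f. valid_tri f \<and> 0 \<le> strip_x f \<and> strip_x f < n \<and> 0 \<le> strip_y f \<and> strip_y f < m}"
  let ?T1 = "{f \<in> ?F. strip_s f < a}" and ?T2 = "{f \<in> ?F. d \<le> strip_s f}"
  have finF: "finite ?F"
    by (rule finite_subset[of _ "{0..n} \<times> {0..m} \<times> {0..n+m}"]) (auto simp: valid_tri_def)
  have T1: "?T1 = corner_triangle a"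
    using assms by (auto simp: corner_triangle_def valid_tri_def)
  have T2: "card ?T2 = card (corner_triangle (n + m - d))"
    using card_upper_corner[OF assms(4,5)] by (simp add: conj_assoc)
  have sub: "?T1 \<union> ?T2 \<subseteq> ?F"
    by blast
  have hex: "hexagon 0 n 0 m a d = ?F - (?T1 \<union> ?T2)"
    by (auto simp: hexagon_def)
  have "card (hexagon 0 n 0 m a d) = card ?F - card (?T1 \<union> ?T2)"
    unfolding hex using finF sub by (meson card_Diff_subset finite_subset)
  moreover have "card (?T1 \<union> ?T2) = card ?T1 + card ?T2"
    using finF assms by (intro card_Un_disjoint) (auto intro: rev_finite_subset[of ?F])
  moreover have "card (?T1 \<union> ?T2) \<le> card ?F"
    using finF sub by (rule card_mono)
  ultimately show ?thesis
    using card_parallelogram[of n m] card_corner_triangle[of a] card_corner_triangle[of "n + m - d"]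
      T1 T2 assms by (simp add: of_nat_diff)
qed

text \<open>Here n, m and d - a are the numbers of strips of the hexagon in the three directions.\<close>
lemma hexagon_area_bound:
  fixes n m a d :: int
  shows "6 * (2 * n * m - a * a - (n + m - d) * (n + m - d)) \<le> (n + m + d - a)\<^sup>2"
proof -
  have "(n + m + d - a)\<^sup>2 - 6 * (2 * n * m - a * a - (n + m - d) * (n + m - d)) =
      3 * (n + m - d - a)\<^sup>2 + 2 * ((a + n - d)\<^sup>2 + (m - n)\<^sup>2 + (d - m - a)\<^sup>2)"
    by (simp add: power2_eq_square algebra_simps)
  moreover have "0 \<le> 3 * (n + m - d - a)\<^sup>2 + 2 * ((a + n - d)\<^sup>2 + (m - n)\<^sup>2 + (d - m - a)\<^sup>2)"
    by simp
  ultimately show ?thesis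
    by linarith
qed

definition tri_automorphism :: "(tri \<Rightarrow> tri) \<Rightarrow> bool" where
  "tri_automorphism \<psi> \<longleftrightarrow> bij \<psi> \<and> (\<forall>f. valid_tri (\<psi> f) \<longleftrightarrow> valid_tri f)
     \<and> (\<forall>f g. tri_adj (\<psi> f) (\<psi> g) \<longleftrightarrow> tri_adj f g)"

lemma tri_automorphismI:
  assumes "\<And>f. \<psi> (\<phi> f) = f" "\<And>f. \<phi> (\<psi> f) = f"
    and "\<And>f. valid_tri (\<psi> f) \<longleftrightarrow> valid_tri f" "\<And>f g. tri_adj (\<psi> f) (\<psi> g) \<longleftrightarrow> tri_adj f g"
  shows "tri_automorphism \<psi>"
  unfolding tri_automorphism_def using assms by (metis bij_betw_byWitness subset_UNIV)

lemma tri_automorphism_inj: "tri_automorphism \<psi> \<Longrightarrow> inj_on \<psi> A"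
  unfolding tri_automorphism_def by (meson bij_is_inj inj_on_subset subset_UNIV)

lemma card_tri_automorphism_image: "tri_automorphism \<psi> \<Longrightarrow> card (\<psi> ` M) = card M"
  by (simp add: card_image tri_automorphism_inj)

lemma tri_automorphism_image_valid:
  "tri_automorphism \<psi> \<Longrightarrow> M \<subseteq> {f. valid_tri f} \<Longrightarrow> \<psi> ` M \<subseteq> {f. valid_tri f}"
  unfolding tri_automorphism_def by auto

lemma connected_tri_automorphism_image:
  "tri_automorphism \<psi> \<Longrightarrow> connected_wrt tri_adj (\<psi> ` M) \<longleftrightarrow> connected_wrt tri_adj M"
  by (rule connected_wrt_image) (auto simp: tri_automorphism_inj tri_automorphism_def)

lemma tri_perim_tri_automorphism_image:
  assumes \<psi>: "tri_automorphism \<psi>"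
  shows "tri_perim (\<psi> ` M) = tri_perim M"
proof -
  have inj: "inj \<psi>" and adj: "\<And>f g. tri_adj (\<psi> f) (\<psi> g) \<longleftrightarrow> tri_adj f g" and "surj \<psi>"
    using \<psi> by (auto simp: tri_automorphism_def bij_def)
  have "boundary_pairs (\<psi> ` M) = map_prod \<psi> \<psi> ` boundary_pairs M"
  proof (intro set_eqI iffI)
    fix p assume "p \<in> boundary_pairs (\<psi> ` M)"
    then obtain f b where p: "p = (\<psi> f, b)" "f \<in> M" "b \<notin> \<psi> ` M" "tri_adj (\<psi> f) b"
      unfolding boundary_pairs_def by blast
    obtain g where "b = \<psi> g"
      using \<open>surj \<psi>\<close> by (metis surjD)
    with p have "(f, g) \<in> boundary_pairs M" "p = map_prod \<psi> \<psi> (f, g)"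
      by (auto simp: boundary_pairs_def adj)
    then show "p \<in> map_prod \<psi> \<psi> ` boundary_pairs M"
      by blast
  next
    fix p assume "p \<in> map_prod \<psi> \<psi> ` boundary_pairs M"
    then obtain f g where "(f, g) \<in> boundary_pairs M" "p = (\<psi> f, \<psi> g)"
      by auto
    then show "p \<in> boundary_pairs (\<psi> ` M)"
      using inj unfolding boundary_pairs_def by (simp add: adj inj_image_mem_iff)
  qed
  moreover have "inj_on (map_prod \<psi> \<psi>) (boundary_pairs M)"
    using prod.inj_map[OF inj inj] by (rule inj_on_subset) simp
  ultimately show ?thesis
    unfolding tri_perim_def by (simp add: card_image)
qed

definition tri_shift :: "int \<Rightarrow> int \<Rightarrow> tri \<Rightarrow> tri" where
  "tri_shift a b f = (case f of (X, Y, S) \<Rightarrow> (X + a, Y + b, S + a + b))"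

lemma tri_automorphism_tri_shift: "tri_automorphism (tri_shift a b)"
  by (rule tri_automorphismI[of _ "tri_shift (- a) (- b)"])
    (auto simp: tri_shift_def tri_adj_iff valid_tri_def split: prod.splits)

lemma tri_shift_inverse [simp]: "tri_shift (- a) (- b) (tri_shift a b f) = f"
  by (cases f) (simp add: tri_shift_def)

lemma tri_shift_hexagon:
  "tri_shift a b ` hexagon x0 x1 y0 y1 s0 s1 = hexagon (x0 + a) (x1 + a) (y0 + b) (y1 + b) (s0 + a + b) (s1 + a + b)"
  using tri_shift_inverse[of "- a" "- b"]
  by (subst image_eq_vimage_inverse[of _ "tri_shift (- a) (- b)"])
    (auto simp: hexagon_def tri_shift_def valid_tri_def split: prod.splits)

section \<open>The isoperimetric inequality\<close>

lemma valid_tri_strips: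
  "valid_tri f \<Longrightarrow> strip_x f + strip_y f \<le> strip_s f \<and> strip_s f \<le> strip_x f + strip_y f + 1"
  by (cases f) (auto simp: valid_tri_def)

lemma tri_adj_strips_step:
  "tri_adj f g \<Longrightarrow> \<bar>strip_x f - strip_x g\<bar> \<le> 1 \<and> \<bar>strip_y f - strip_y g\<bar> \<le> 1 \<and> \<bar>strip_s f - strip_s g\<bar> \<le> 1"
  by (cases f) (auto simp: tri_adj_def tri_nbrs_def split: if_splits)

text \<open>The strips met by a connected set M form three intervals; they cut out a hexagon containing
  M whose number of strips is at most the perimeter of M.\<close>
lemma bounding_hexagon:
  assumes fin: "finite M" and ne: "M \<noteq> {}" and val: "M \<subseteq> {f. valid_tri f}"
    and conn: "connected_wrt tri_adj M"
  obtains x0 y0 n m a d where "0 \<le> a" "a \<le> n" "a \<le> m" "n \<le> d" "m \<le> d" "d \<le> n + m"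
    "M \<subseteq> tri_shift x0 y0 ` hexagon 0 n 0 m a d" "n + m + d - a \<le> int (tri_perim M)"
proof -
  define x0 x1 y0 y1 s0 s1 where "x0 = Min (strip_x ` M)" "x1 = Max (strip_x ` M)"
    "y0 = Min (strip_y ` M)" "y1 = Max (strip_y ` M)" "s0 = Min (strip_s ` M)" "s1 = Max (strip_s ` M)"
  have bounds: "x0 \<le> strip_x f" "strip_x f \<le> x1" "y0 \<le> strip_y f" "strip_y f \<le> y1"
    "s0 \<le> strip_s f" "strip_s f \<le> s1" "strip_x f + strip_y f \<le> strip_s f"
    "strip_s f \<le> strip_x f + strip_y f + 1" if "f \<in> M" for f
    using that fin val valid_tri_strips[of f] by (auto simp: x0_x1_y0_y1_s0_s1_def)
  have "x0 \<in> strip_x ` M" "x1 \<in> strip_x ` M" "y0 \<in> strip_y ` M" "y1 \<in> strip_y ` M"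
    "s0 \<in> strip_s ` M" "s1 \<in> strip_s ` M"
    using fin ne by (simp_all add: x0_x1_y0_y1_s0_s1_def)
  then obtain fx0 fx1 fy0 fy1 fs0 fs1 where
    "fx0 \<in> M" "strip_x fx0 = x0" "fx1 \<in> M" "strip_x fx1 = x1" "fy0 \<in> M" "strip_y fy0 = y0"
    "fy1 \<in> M" "strip_y fy1 = y1" "fs0 \<in> M" "strip_s fs0 = s0" "fs1 \<in> M" "strip_s fs1 = s1"
    by (elim imageE) (rule that, simp_all)
  note extreme = bounds[OF this(1)] bounds[OF this(3)] bounds[OF this(5)] bounds[OF this(7)]
    bounds[OF this(9)] bounds[OF this(11)] this
  show ?thesis
  proof (rule that[of "s0 - x0 - y0" "x1 - x0 + 1" "y1 - y0 + 1" "s1 + 1 - x0 - y0" x0 y0])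
    show "0 \<le> s0 - x0 - y0" "s0 - x0 - y0 \<le> x1 - x0 + 1" "s0 - x0 - y0 \<le> y1 - y0 + 1"
      "x1 - x0 + 1 \<le> s1 + 1 - x0 - y0" "y1 - y0 + 1 \<le> s1 + 1 - x0 - y0"
      "s1 + 1 - x0 - y0 \<le> x1 - x0 + 1 + (y1 - y0 + 1)"
      using extreme by linarith+
    show "M \<subseteq> tri_shift x0 y0 ` hexagon 0 (x1 - x0 + 1) 0 (y1 - y0 + 1) (s0 - x0 - y0) (s1 + 1 - x0 - y0)"
      using bounds val unfolding tri_shift_hexagon by (auto simp: hexagon_def)
    have "x1 - x0 + 1 \<le> int (card (strip_x ` M))" "y1 - y0 + 1 \<le> int (card (strip_y ` M))"
      "s1 - s0 + 1 \<le> int (card (strip_s ` M))"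
      unfolding x0_x1_y0_y1_s0_s1_def
      using card_image_ge_range[OF fin ne conn] tri_adj_strips_step by blast+
    then show "x1 - x0 + 1 + (y1 - y0 + 1) + (s1 + 1 - x0 - y0) - (s0 - x0 - y0) \<le> int (tri_perim M)"
      using tri_perim_ge_strips[OF fin val] by linarith
  qed
qed

theorem isoperimetric_inequality:
  assumes "finite M" "M \<noteq> {}" "M \<subseteq> {f. valid_tri f}" "connected_wrt tri_adj M"
  shows "6 * int (card M) \<le> (int (tri_perim M))\<^sup>2"
proof -
  obtain x0 y0 n m a d where hex: "0 \<le> a" "a \<le> n" "a \<le> m" "n \<le> d" "m \<le> d" "d \<le> n + m"
    and sub: "M \<subseteq> tri_shift x0 y0 ` hexagon 0 n 0 m a d" and per: "n + m + d - a \<le> int (tri_perim M)"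
    by (rule bounding_hexagon[OF assms])
  have "card M \<le> card (hexagon 0 n 0 m a d)"
    using card_mono[OF _ sub] card_tri_automorphism_image[OF tri_automorphism_tri_shift] by simp
  then have "int (card M) \<le> 2 * n * m - a * a - (n + m - d) * (n + m - d)"
    using card_hexagon[OF hex] by linarith
  then have "6 * int (card M) \<le> 6 * (2 * n * m - a * a - (n + m - d) * (n + m - d))"
    by simp
  also have "\<dots> \<le> (n + m + d - a)\<^sup>2"
    by (rule hexagon_area_bound)
  also have "\<dots> \<le> (int (tri_perim M))\<^sup>2"
    using per hex by (intro power_mono) auto
  finally show ?thesis .
qed

section \<open>Growing a hexagon by a bar\<close>

text \<open>The hexagon with strip ranges [x0, x1), [y0, y1), [s0, s1) is obtained from the one with
  x-range [x0 + 1, x1) by adding its bar in the strip x0 face by face, in the order of increasing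
  x + y; the k-th face of the bar is a down-face for even k and an up-face for odd k.\<close>
locale bar_growth =
  fixes x0 x1 y0 y1 s0 s1 :: int
  assumes wide: "x0 + 2 \<le> x1" and bar_low: "x0 + y0 + 1 \<le> s0"
    and bar_high: "x0 + y1 + 1 \<le> s1" and bar_nonempty: "s0 \<le> x0 + y1"
begin

definition base :: "tri set" where
  "base = hexagon (x0 + 1) x1 y0 y1 s0 s1"

definition bar_size :: nat where
  "bar_size = nat (2 * (x0 + y1 - s0) + 1)"

definition bar_face :: "nat \<Rightarrow> tri" where
  "bar_face k = (x0, s0 - x0 - 1 + int ((k + 1) div 2), s0 + int (k div 2))"

definition grown :: "nat \<Rightarrow> tri set" where
  "grown k = base \<union> bar_face ` {..<k}"

lemma int_bar_size: "int bar_size = 2 * (x0 + y1 - s0) + 1"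
  using bar_nonempty by (simp add: bar_size_def)

lemma bar_face_even: "bar_face (2 * i) = (x0, s0 - x0 - 1 + int i, s0 + int i)"
  and bar_face_odd: "bar_face (2 * i + 1) = (x0, s0 - x0 + int i, s0 + int i)"
  by (simp_all add: bar_face_def)

lemma bar_face_cases:
  obtains i where "k = 2 * i" "bar_face k = (x0, s0 - x0 - 1 + int i, s0 + int i)"
  | i where "k = 2 * i + 1" "bar_face k = (x0, s0 - x0 + int i, s0 + int i)"
  by (metis bar_face_even bar_face_odd oddE evenE)

lemma valid_bar_face [simp]: "valid_tri (bar_face k)"
  by (cases k rule: bar_face_cases) (auto simp: valid_tri_def)

lemma bar_face_inj [simp]: "bar_face j = bar_face k \<longleftrightarrow> j = k"
  by (cases j rule: bar_face_cases; cases k rule: bar_face_cases) auto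

lemma strip_x_bar_face [simp]: "strip_x (bar_face k) = x0"
  by (simp add: bar_face_def)

lemma strip_x_base: "f \<in> base \<Longrightarrow> x0 + 1 \<le> strip_x f"
  by (simp add: base_def hexagon_def)

lemma bar_face_notin_base [simp]: "bar_face k \<notin> base"
  using strip_x_base[of "bar_face k"] by auto

lemma bar_face_in_grown [simp]: "bar_face j \<in> grown k \<longleftrightarrow> j < k"
  by (auto simp: grown_def)

lemma finite_grown [simp]: "finite (grown k)"
  by (simp add: grown_def base_def)

lemma grown_valid: "grown k \<subseteq> {f. valid_tri f}"
  using hexagon_valid by (auto simp: grown_def base_def)

lemma grown_0 [simp]: "grown 0 = base"
  by (simp add: grown_def)

lemma grown_Suc: "grown (Suc k) = insert (bar_face k) (grown k)"
  by (auto simp: grown_def lessThan_Suc)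

lemma grown_mono: "j \<le> k \<Longrightarrow> grown j \<subseteq> grown k"
  by (auto simp: grown_def)

lemma grown_diff_base: "grown k - base = bar_face ` {..<k}"
  by (auto simp: grown_def)

lemma card_grown: "card (grown k) = card base + k"
  by (induction k) (simp_all add: grown_Suc)

lemma tri_nbrs_bar_face_even:
  "tri_nbrs (bar_face (2 * i)) =
     {(x0, s0 - x0 - 1 + int i, s0 + int i - 1), bar_face (2 * i + 1), (x0 + 1, s0 - x0 - 1 + int i, s0 + int i)}"
  using bar_face_even[of i] bar_face_odd[of i] by (auto simp: tri_nbrs_def algebra_simps)

lemma tri_nbrs_bar_face_odd:
  "tri_nbrs (bar_face (2 * i + 1)) = {bar_face (2 * i + 2), bar_face (2 * i), (x0 - 1, s0 - x0 + int i, s0 + int i)}"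
  using bar_face_even[of i] bar_face_odd[of i] bar_face_even[of "i + 1"]
  by (auto simp: tri_nbrs_def algebra_simps)

lemma beside_bar_face_in_base:
  "2 * i < bar_size \<Longrightarrow> (x0 + 1, s0 - x0 - 1 + int i, s0 + int i) \<in> base"
  using wide bar_low bar_high int_bar_size by (auto simp: base_def hexagon_def valid_tri_def)

lemma card_tri_nbrs_bar_face_grown:
  assumes "k < bar_size"
  shows "card (tri_nbrs (bar_face k) \<inter> grown k) = (if k = 0 \<or> odd k then 1 else 2)"
proof (cases k rule: bar_face_cases)
  case (1 i)
  let ?low = "(x0, s0 - x0 - 1 + int i, s0 + int i - 1)" and ?side = "(x0 + 1, s0 - x0 - 1 + int i, s0 + int i)"
  have low: "?low \<in> grown k \<longleftrightarrow> i \<noteq> 0"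
  proof (cases i)
    case 0
    then show ?thesis
      using 1 strip_x_base[of ?low] by (auto simp: grown_def)
  next
    case (Suc j)
    then have "?low = bar_face (2 * j + 1)"
      using bar_face_odd[of j] by simp
    then show ?thesis
      using 1 Suc by simp
  qed
  have side: "?side \<in> grown k"
    using 1 assms beside_bar_face_in_base[of i] by (simp add: grown_def)
  have "bar_face (2 * i + 1) \<notin> grown k"
    using 1 by simp
  then have "tri_nbrs (bar_face k) \<inter> grown k = (if i = 0 then {?side} else {?low, ?side})"
    unfolding 1(1) tri_nbrs_bar_face_even using low side 1(1) by auto
  then show ?thesis
    using 1 by simp
next
  case (2 i)
  have "(x0 - 1, s0 - x0 + int i, s0 + int i) \<notin> grown k"
    by (auto simp: grown_def bar_face_def dest: strip_x_base)
  then have "tri_nbrs (bar_face k) \<inter> grown k = {bar_face (2 * i)}"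
    unfolding 2(1) tri_nbrs_bar_face_odd using 2(1) by auto
  then show ?thesis
    using 2 by simp
qed

lemma tri_perim_grown:
  "k \<le> bar_size \<Longrightarrow> tri_perim (grown k) = tri_perim base + (if k = 0 then 0 else if odd k then 1 else 2)"
proof (induction k)
  case (Suc k)
  have "int (tri_perim (grown (Suc k))) = int (tri_perim (grown k)) + 3 - 2 * int (card (tri_nbrs (bar_face k) \<inter> grown k))"
    unfolding grown_Suc by (rule tri_perim_insert) auto
  then have "int (tri_perim (grown (Suc k))) = int (tri_perim base + (if odd (Suc k) then 1 else 2))"
    using Suc card_tri_nbrs_bar_face_grown[of k] by auto
  then show ?case
    by (simp only: of_nat_eq_iff) simp
qed simp

lemma tri_adj_bar_face_Suc: "tri_adj (bar_face k) (bar_face (Suc k))"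
proof (cases k rule: bar_face_cases)
  case (1 i)
  then show ?thesis
    unfolding 1(1) tri_adj_def tri_nbrs_bar_face_even by (simp add: valid_tri_def)
next
  case (2 i)
  then show ?thesis
    unfolding 2(1) tri_adj_def tri_nbrs_bar_face_odd by (simp add: valid_tri_def)
qed

lemma connected_bar: "connected_wrt tri_adj (bar_face ` {..<k})"
proof (induction k)
  case 0
  then show ?case by (simp add: connected_wrt_def)
next
  case (Suc k)
  show ?case
  proof (cases k)
    case 0
    then show ?thesis by (simp add: lessThan_Suc connected_wrt_singleton)
  next
    case (Suc j)
    then show ?thesis
      using connected_wrt_insert[OF Suc.IH, of "bar_face j" "bar_face k"] tri_adj_bar_face_Suc[of j]
        tri_adj_sym by (simp add: lessThan_Suc)
  qed
qed

lemma connected_grown: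
  assumes "connected_wrt tri_adj base" "k \<le> bar_size"
  shows "connected_wrt tri_adj (grown k)"
  using assms(2)
proof (induction k)
  case (Suc k)
  obtain g where "g \<in> grown k" "tri_adj g (bar_face k)"
  proof (cases k)
    case 0
    then show ?thesis
      using Suc.prems beside_bar_face_in_base[of 0] bar_face_even[of 0]
      by (intro that[of "(x0 + 1, s0 - x0 - 1, s0)"]) (auto simp: tri_adj_def tri_nbrs_def valid_tri_def)
  next
    case (Suc j)
    then show ?thesis
      using tri_adj_bar_face_Suc[of j] by (intro that[of "bar_face j"]) auto
  qed
  moreover have "connected_wrt tri_adj (grown k)"
    using Suc by simp
  ultimately show ?case
    unfolding grown_Suc by (metis connected_wrt_insert tri_adj_sym)
qed (simp add: assms(1))

lemma bar_face_in_hexagon: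
  assumes "j < bar_size"
  shows "bar_face j \<in> hexagon x0 x1 y0 y1 s0 s1"
proof -
  have "int j < 2 * (x0 + y1 - s0) + 1"
    using assms int_bar_size by linarith
  then show ?thesis
    using wide bar_low bar_high by (cases j rule: bar_face_cases) (auto simp: hexagon_def valid_tri_def)
qed

lemma hexagon_column_in_bar:
  assumes f: "f \<in> hexagon x0 x1 y0 y1 s0 s1" and "strip_x f = x0"
  shows "f \<in> bar_face ` {..<bar_size}"
proof -
  obtain Y S where XYS: "f = (x0, Y, S)"
    using assms(2) by (cases f) auto
  have rng: "s0 \<le> S" "Y < y1"
    using f XYS by (auto simp: hexagon_def)
  consider "S = x0 + Y" | "S = x0 + Y + 1"
    using f XYS by (auto simp: hexagon_def valid_tri_def)
  then show ?thesis
  proof cases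
    case 1
    then have "f = bar_face (2 * nat (S - s0) + 1)"
      using XYS rng bar_face_odd[of "nat (S - s0)"] by auto
    moreover have "int (2 * nat (S - s0) + 1) < int bar_size"
      using 1 rng int_bar_size by simp
    ultimately show ?thesis
      by (simp only: of_nat_less_iff lessThan_iff image_eqI)
  next
    case 2
    then have "f = bar_face (2 * nat (S - s0))"
      using XYS rng bar_face_even[of "nat (S - s0)"] by auto
    moreover have "int (2 * nat (S - s0)) < int bar_size"
      using 2 rng int_bar_size by simp
    ultimately show ?thesis
      by (simp only: of_nat_less_iff lessThan_iff image_eqI)
  qed
qed

lemma hexagon_eq_grown: "hexagon x0 x1 y0 y1 s0 s1 = grown bar_size"
proof
  show "grown bar_size \<subseteq> hexagon x0 x1 y0 y1 s0 s1"
    using bar_face_in_hexagon by (auto simp: grown_def base_def hexagon_def)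
  show "hexagon x0 x1 y0 y1 s0 s1 \<subseteq> grown bar_size"
    using hexagon_column_in_bar by (fastforce simp: grown_def base_def hexagon_def)
qed

end

section \<open>Quasi-regular hexagons\<close>

lemma tri_hex_eq_hexagon:
  "tri_hex d a b c = face_of ` hexagon 0 (int d - int b) 0 (int d - int c) (int a) (int d)"
proof -
  let ?Q = "\<lambda>F. (\<forall>(x, y)\<in>F. 0 \<le> x \<and> 0 \<le> y \<and> x + y \<le> int d) \<and> \<not> (\<forall>(x, y)\<in>F. x + y \<le> int a)
    \<and> \<not> (\<forall>(x, y)\<in>F. x \<ge> int d - int b) \<and> \<not> (\<forall>(x, y)\<in>F. y \<ge> int d - int c)"
  have eq: "valid_tri f \<Longrightarrow> ?Q (face_of f) \<longleftrightarrow> f \<in> hexagon 0 (int d - int b) 0 (int d - int c) (int a) (int d)" for f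
    by (cases rule: valid_triE) (auto simp: face_of_up face_of_down hexagon_def)
  have "{f. valid_tri f \<and> ?Q (face_of f)} = hexagon 0 (int d - int b) 0 (int d - int c) (int a) (int d)"
    using eq hexagon_valid by blast
  moreover have "tri_hex d a b c = face_of ` {f. valid_tri f \<and> ?Q (face_of f)}"
    unfolding tri_hex_def faces_eq_image_face_of by auto
  ultimately show ?thesis
    by simp
qed

definition qh_hexagon :: "int \<Rightarrow> nat \<Rightarrow> tri set" where
  "qh_hexagon r i =
     (if i = 0 then hexagon 0 (2 * r) 0 (2 * r) r (3 * r)
      else if i = 1 then hexagon 0 (2 * r) 0 (2 * r) (r - 1) (3 * r)
      else if i = 2 then hexagon 0 (2 * r + 1) 0 (2 * r) r (3 * r + 1)
      else if i = 3 then hexagon 0 (2 * r + 1) 0 (2 * r + 1) r (3 * r + 1)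
      else if i = 4 then hexagon 0 (2 * r + 1) 0 (2 * r + 1) r (3 * r + 2)
      else hexagon 0 (2 * r + 2) 0 (2 * r + 1) r (3 * r + 2))"

definition qh_tri :: "nat \<Rightarrow> tri set" where
  "qh_tri n = qh_hexagon (int (n div 6) + 1) (n mod 6)"

lemma qh_seq_eq_face_of: "qh_seq n = face_of ` qh_tri n"
proof -
  have "qhex r i = face_of ` qh_hexagon (int r) i" if "r \<ge> 1" for r i
    using that by (auto simp: qhex_def qh_hexagon_def tri_hex_eq_hexagon of_nat_diff algebra_simps)
  then show ?thesis
    unfolding qh_seq_def qh_tri_def by (simp add: add.commute)
qed

lemma qh_tri_valid: "qh_tri n \<subseteq> {f. valid_tri f}"
  using hexagon_valid by (simp add: qh_tri_def qh_hexagon_def)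

lemma finite_qh_tri [simp]: "finite (qh_tri n)"
  by (simp add: qh_tri_def qh_hexagon_def)

lemma qh_tri_0: "qh_tri 0 = {(0, 1, 1), (0, 0, 1), (1, 0, 1), (1, 0, 2), (1, 1, 2), (0, 1, 2)}"
proof (intro set_eqI iffI)
  fix f assume "f \<in> qh_tri 0"
  then have f: "f \<in> hexagon 0 2 0 2 1 3"
    by (simp add: qh_tri_def qh_hexagon_def)
  obtain X Y S where XYS: "f = (X, Y, S)"
    by (cases f)
  have "X = 0 \<or> X = 1" "Y = 0 \<or> Y = 1" "S = X + Y \<or> S = X + Y + 1" "1 \<le> S" "S < 3"
    using f XYS by (auto simp: hexagon_def valid_tri_def)
  then show "f \<in> {(0, 1, 1), (0, 0, 1), (1, 0, 1), (1, 0, 2), (1, 1, 2), (0, 1, 2)}"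
    unfolding XYS by auto
qed (auto simp: qh_tri_def qh_hexagon_def hexagon_def valid_tri_def)

text \<open>Up to a lattice symmetry and a translation, Q' arises from Q by attaching a complete bar.\<close>
definition grows_by_bar :: "tri set \<Rightarrow> tri set \<Rightarrow> bool" where
  "grows_by_bar Q Q' \<longleftrightarrow> (\<exists>\<psi> x0 x1 y0 y1 s0 s1 a b. bar_growth x0 x1 y0 y1 s0 s1 \<and> tri_automorphism \<psi>
     \<and> \<psi> ` hexagon (x0 + 1) x1 y0 y1 s0 s1 = Q \<and> \<psi> ` hexagon x0 x1 y0 y1 s0 s1 = tri_shift a b ` Q')"

lemma grows_by_barI:
  assumes "bar_growth x0 x1 y0 y1 s0 s1" and "\<And>f. \<psi> (\<phi> f) = f" "\<And>f. \<phi> (\<psi> f) = f"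
    and "\<And>f. valid_tri (\<psi> f) \<longleftrightarrow> valid_tri f" "\<And>f g. tri_adj (\<psi> f) (\<psi> g) \<longleftrightarrow> tri_adj f g"
    and "\<phi> -` hexagon (x0 + 1) x1 y0 y1 s0 s1 = Q" "\<phi> -` hexagon x0 x1 y0 y1 s0 s1 = tri_shift a b ` Q'"
  shows "grows_by_bar Q Q'"
  unfolding grows_by_bar_def using assms tri_automorphismI[of \<psi> \<phi>] image_eq_vimage_inverse[of \<psi> \<phi>]
  by metis

lemma qh_hexagon_simps:
  "qh_hexagon r 0 = hexagon 0 (2 * r) 0 (2 * r) r (3 * r)"
  "qh_hexagon r 1 = hexagon 0 (2 * r) 0 (2 * r) (r - 1) (3 * r)"
  "qh_hexagon r 2 = hexagon 0 (2 * r + 1) 0 (2 * r) r (3 * r + 1)"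
  "qh_hexagon r 3 = hexagon 0 (2 * r + 1) 0 (2 * r + 1) r (3 * r + 1)"
  "qh_hexagon r 4 = hexagon 0 (2 * r + 1) 0 (2 * r + 1) r (3 * r + 2)"
  "qh_hexagon r 5 = hexagon 0 (2 * r + 2) 0 (2 * r + 1) r (3 * r + 2)"
  by (simp_all add: qh_hexagon_def)

lemma qh_hexagon_grows_by_bar:
  assumes "1 \<le> r"
  shows "grows_by_bar (qh_hexagon r 0) (qh_hexagon r 1)"
    and "grows_by_bar (qh_hexagon r 1) (qh_hexagon r 2)"
    and "grows_by_bar (qh_hexagon r 2) (qh_hexagon r 3)"
    and "grows_by_bar (qh_hexagon r 3) (qh_hexagon r 4)"
    and "grows_by_bar (qh_hexagon r 4) (qh_hexagon r 5)"
    and "grows_by_bar (qh_hexagon r 5) (qh_hexagon (r + 1) 0)"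
proof -
  let ?\<psi>0 = "\<lambda>(X, Y, S). (S, - Y - 1, X)"
  show "grows_by_bar (qh_hexagon r 0) (qh_hexagon r 1)"
    by (rule grows_by_barI[of "r - 1" "3 * r" "- 2 * r" 0 0 "2 * r" ?\<psi>0 ?\<psi>0 _ 0 0], simp_all only: qh_hexagon_simps tri_shift_hexagon)
      (use assms in \<open>auto simp: bar_growth_def hexagon_def
        valid_tri_def tri_adj_iff split: prod.splits\<close>)
  let ?\<psi>1 = "\<lambda>f. f"
  show "grows_by_bar (qh_hexagon r 1) (qh_hexagon r 2)"
    by (rule grows_by_barI[of "- 1" "2 * r" 0 "2 * r" "r - 1" "3 * r" ?\<psi>1 ?\<psi>1 _ "- 1" 0], simp_all only: qh_hexagon_simps tri_shift_hexagon)
      (use assms in \<open>auto simp: bar_growth_def hexagon_def\<close>)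
  let ?\<psi>2 = "\<lambda>(X, Y, S). (S, 2 * r - X, Y + 2 * r + 1)" and ?\<phi>2 = "\<lambda>(X, Y, S). (2 * r - Y, S - 2 * r - 1, X)"
  show "grows_by_bar (qh_hexagon r 2) (qh_hexagon r 3)"
    by (rule grows_by_barI[of 0 "2 * r + 1" "- r - 1" r 0 "2 * r + 1" ?\<psi>2 ?\<phi>2 _ 0 0], simp_all only: qh_hexagon_simps tri_shift_hexagon)
      (use assms in \<open>auto simp: bar_growth_def hexagon_def
        valid_tri_def tri_adj_iff split: prod.splits\<close>)
  let ?\<psi>3 = "\<lambda>(X, Y, S). (3 * r + 1 - S, Y, 3 * r + 1 - X)"
  show "grows_by_bar (qh_hexagon r 3) (qh_hexagon r 4)"
    by (rule grows_by_barI[of 0 "2 * r + 2" 0 "2 * r + 1" "r + 1" "3 * r + 2" ?\<psi>3 ?\<psi>3 _ 0 0], simp_all only: qh_hexagon_simps tri_shift_hexagon)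
      (use assms in \<open>auto simp: bar_growth_def hexagon_def
        valid_tri_def tri_adj_iff split: prod.splits\<close>)
  let ?\<psi>4 = "\<lambda>(X, Y, S). (2 * r + 1 - X, - Y, 2 * r + 2 - S)"
  show "grows_by_bar (qh_hexagon r 4) (qh_hexagon r 5)"
    by (rule grows_by_barI[of 0 "2 * r + 2" "- 2 * r" 1 "1 - r" "r + 3" ?\<psi>4 ?\<psi>4 _ 0 0], simp_all only: qh_hexagon_simps tri_shift_hexagon)
      (use assms in \<open>auto simp: bar_growth_def hexagon_def
        valid_tri_def tri_adj_iff split: prod.splits\<close>)
  let ?\<psi>5 = "\<lambda>(X, Y, S). (Y, X - 1, S - 1)" and ?\<phi>5 = "\<lambda>(X, Y, S). (Y + 1, X, S + 1)"
  show "grows_by_bar (qh_hexagon r 5) (qh_hexagon (r + 1) 0)"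
    by (rule grows_by_barI[of 0 "2 * r + 2" 0 "2 * r + 2" "r + 1" "3 * r + 3" ?\<psi>5 ?\<phi>5 _ 0 "- 1"], simp_all only: qh_hexagon_simps tri_shift_hexagon)
      (use assms in \<open>auto simp: bar_growth_def hexagon_def
        valid_tri_def tri_adj_iff algebra_simps split: prod.splits\<close>)
qed

lemma qh_tri_grows_by_bar: "grows_by_bar (qh_tri n) (qh_tri (Suc n))"
proof -
  define r where "r = int (n div 6) + 1"
  have r: "1 \<le> r"
    by (simp add: r_def)
  have cur: "qh_tri n = qh_hexagon r (n mod 6)"
    by (simp add: qh_tri_def r_def)
  have next_in_row: "qh_tri (Suc n) = qh_hexagon r (Suc (n mod 6))" if "n mod 6 < 5"
    using that by (simp add: qh_tri_def r_def mod_Suc div_Suc)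
  have next_row: "qh_tri (Suc n) = qh_hexagon (r + 1) 0" if "n mod 6 = 5"
    using that by (simp add: qh_tri_def r_def mod_Suc div_Suc)
  have "n mod 6 < 6"
    by simp
  then consider "n mod 6 = 0" | "n mod 6 = 1" | "n mod 6 = 2" | "n mod 6 = 3" | "n mod 6 = 4" | "n mod 6 = 5"
    by linarith
  then show ?thesis
  proof cases
    case 2
    then show ?thesis
      using qh_hexagon_grows_by_bar(2)[OF r] cur next_in_row by (simp add: numeral_2_eq_2)
  qed (use qh_hexagon_grows_by_bar[OF r] cur next_in_row next_row in simp_all)
qed

lemma grows_by_bar_tri_perim:
  assumes "grows_by_bar Q Q'"
  shows "tri_perim Q' = tri_perim Q + 1"
proof -
  obtain \<psi> x0 x1 y0 y1 s0 s1 a b where "bar_growth x0 x1 y0 y1 s0 s1" and \<psi>: "tri_automorphism \<psi>"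
    and Q: "\<psi> ` hexagon (x0 + 1) x1 y0 y1 s0 s1 = Q" and Q': "\<psi> ` hexagon x0 x1 y0 y1 s0 s1 = tri_shift a b ` Q'"
    using assms unfolding grows_by_bar_def by blast
  interpret bar_growth x0 x1 y0 y1 s0 s1 by fact
  have "odd bar_size"
    using int_bar_size by presburger
  have "tri_perim Q' = tri_perim (grown bar_size)"
    using Q' hexagon_eq_grown tri_perim_tri_automorphism_image[OF \<psi>]
      tri_perim_tri_automorphism_image[OF tri_automorphism_tri_shift] by metis
  also have "\<dots> = tri_perim base + 1"
    using tri_perim_grown[of bar_size] \<open>odd bar_size\<close> odd_pos by auto
  also have "tri_perim base = tri_perim Q"
    using Q tri_perim_tri_automorphism_image[OF \<psi>, of "hexagon (x0 + 1) x1 y0 y1 s0 s1"]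
    by (simp add: base_def)
  finally show ?thesis .
qed

lemma grows_by_bar_connected:
  assumes "grows_by_bar Q Q'" "connected_wrt tri_adj Q"
  shows "connected_wrt tri_adj Q'"
proof -
  obtain \<psi> x0 x1 y0 y1 s0 s1 a b where "bar_growth x0 x1 y0 y1 s0 s1" and \<psi>: "tri_automorphism \<psi>"
    and Q: "\<psi> ` hexagon (x0 + 1) x1 y0 y1 s0 s1 = Q" and Q': "\<psi> ` hexagon x0 x1 y0 y1 s0 s1 = tri_shift a b ` Q'"
    using assms unfolding grows_by_bar_def by blast
  interpret bar_growth x0 x1 y0 y1 s0 s1 by fact
  have "connected_wrt tri_adj base"
    using assms(2) Q connected_tri_automorphism_image[OF \<psi>, of "hexagon (x0 + 1) x1 y0 y1 s0 s1"]
    by (simp add: base_def)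
  then have "connected_wrt tri_adj (grown bar_size)"
    by (simp add: connected_grown)
  then show ?thesis
    using Q' hexagon_eq_grown connected_tri_automorphism_image[OF \<psi>]
      connected_tri_automorphism_image[OF tri_automorphism_tri_shift] by metis
qed

text \<open>Attaching only the first k faces of the bar gives the standard polyiamonds.\<close>
lemma grows_by_bar_partial:
  assumes "grows_by_bar Q Q'" "connected_wrt tri_adj Q" "Q \<noteq> {}" "k < card Q' - card Q"
  obtains M a b where "M \<subseteq> {f. valid_tri f}" "finite M" "connected_wrt tri_adj M" "card M = card Q + k"
    "Q \<subseteq> M" "M \<subseteq> tri_shift a b ` Q'" "connected_wrt tri_adj (M - Q)" "M - Q \<noteq> tri_shift a b ` Q' - Q"
    "tri_perim M = tri_perim Q + (if k = 0 then 0 else if odd k then 1 else 2)"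
proof -
  obtain \<psi> x0 x1 y0 y1 s0 s1 a b where "bar_growth x0 x1 y0 y1 s0 s1" and \<psi>: "tri_automorphism \<psi>"
    and Q: "\<psi> ` hexagon (x0 + 1) x1 y0 y1 s0 s1 = Q" and Q': "\<psi> ` hexagon x0 x1 y0 y1 s0 s1 = tri_shift a b ` Q'"
    using assms unfolding grows_by_bar_def by blast
  interpret bar_growth x0 x1 y0 y1 s0 s1 by fact
  have Q0: "Q = \<psi> ` grown 0" and Q'_full: "tri_shift a b ` Q' = \<psi> ` grown bar_size"
    using Q Q' hexagon_eq_grown by (simp_all add: base_def)
  have diff: "\<psi> ` grown j - Q = \<psi> ` bar_face ` {..<j}" for j
    unfolding Q0 using tri_automorphism_inj[OF \<psi>] by (simp add: image_set_diff[symmetric] grown_diff_base)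
  have card_diff: "card (\<psi> ` grown j - Q) = j" for j
    unfolding diff card_tri_automorphism_image[OF \<psi>] by (simp add: card_image inj_on_def)
  have "card Q' = card (\<psi> ` grown bar_size)"
    using Q'_full card_tri_automorphism_image[OF tri_automorphism_tri_shift] by metis
  then have "k < bar_size"
    using assms(4) card_grown Q0 by (simp add: card_tri_automorphism_image[OF \<psi>])
  show ?thesis
  proof (rule that[of "\<psi> ` grown k" a b])
    show "\<psi> ` grown k \<subseteq> {f. valid_tri f}" "finite (\<psi> ` grown k)"
      using tri_automorphism_image_valid[OF \<psi> grown_valid] by simp_all
    show "connected_wrt tri_adj (\<psi> ` grown k)"
      using connected_grown[of k] assms(2) \<open>k < bar_size\<close> Q0
      by (simp add: connected_tri_automorphism_image[OF \<psi>])
    show "card (\<psi> ` grown k) = card Q + k"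
      using Q0 card_grown by (simp add: card_tri_automorphism_image[OF \<psi>])
    show "Q \<subseteq> \<psi> ` grown k"
      unfolding Q0 by (intro image_mono grown_mono) simp
    show "\<psi> ` grown k \<subseteq> tri_shift a b ` Q'"
      unfolding Q'_full using \<open>k < bar_size\<close> by (intro image_mono grown_mono) simp
    show "connected_wrt tri_adj (\<psi> ` grown k - Q)"
      unfolding diff by (simp add: connected_tri_automorphism_image[OF \<psi>] connected_bar)
    show "\<psi> ` grown k - Q \<noteq> tri_shift a b ` Q' - Q"
      using card_diff[of k] card_diff[of bar_size] \<open>k < bar_size\<close> Q'_full by auto
    show "tri_perim (\<psi> ` grown k) = tri_perim Q + (if k = 0 then 0 else if odd k then 1 else 2)"
      using tri_perim_grown[of k] \<open>k < bar_size\<close> Q0 by (simp add: tri_perim_tri_automorphism_image[OF \<psi>])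
  qed
qed

lemma boundary_pairs_eq_Sigma:
  "M \<subseteq> {f. valid_tri f} \<Longrightarrow> boundary_pairs M = Sigma M (\<lambda>f. tri_nbrs f - M)"
  by (auto simp: boundary_pairs_def tri_adj_def)

lemma connected_wrt_path: "successively (\<lambda>x y. R x y \<and> R y x) xs \<Longrightarrow> connected_wrt R (set xs)"
proof (induction xs rule: induct_list012)
  case 1
  then show ?case by (simp add: connected_wrt_def)
next
  case (2 x)
  then show ?case by (simp add: connected_wrt_singleton)
next
  case (3 x y zs)
  then show ?case
    using connected_wrt_insert[of R "set (y # zs)" y x] by simp
qed

lemma qh_tri_perim_connected: "tri_perim (qh_tri n) = n + 6 \<and> connected_wrt tri_adj (qh_tri n)"
proof (induction n)
  case 0
  have "tri_perim (qh_tri 0) = card (Sigma (qh_tri 0) (\<lambda>f. tri_nbrs f - qh_tri 0))"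
    unfolding tri_perim_def boundary_pairs_eq_Sigma[OF qh_tri_valid] ..
  also have "\<dots> = 6"
    unfolding qh_tri_0 by (simp add: tri_nbrs_def)
  finally have "tri_perim (qh_tri 0) = 6" .
  moreover have "connected_wrt tri_adj (set [(0, 1, 1), (0, 0, 1), (1, 0, 1), (1, 0, 2), (1, 1, 2), (0, 1, 2)])"
    by (rule connected_wrt_path) (simp add: tri_adj_def tri_nbrs_def valid_tri_def)
  ultimately show ?case
    by (simp add: qh_tri_0)
next
  case (Suc n)
  then show ?case
    using grows_by_bar_tri_perim[OF qh_tri_grows_by_bar] grows_by_bar_connected[OF qh_tri_grows_by_bar]
    by simp
qed

lemma card_qh_hexagon:
  assumes "1 \<le> r"
  shows "int (card (qh_hexagon r 0)) = 6 * r * r"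
    and "int (card (qh_hexagon r 1)) = 6 * r * r + 2 * r - 1"
    and "int (card (qh_hexagon r 2)) = 6 * r * r + 4 * r"
    and "int (card (qh_hexagon r 3)) = 6 * r * r + 6 * r + 1"
    and "int (card (qh_hexagon r 4)) = 6 * r * r + 8 * r + 2"
    and "int (card (qh_hexagon r 5)) = 6 * r * r + 10 * r + 3"
  using assms unfolding qh_hexagon_simps by (simp_all add: card_hexagon algebra_simps)

lemma card_qh_tri_bounds:
  "(int n + 5)\<^sup>2 < 6 * int (card (qh_tri n)) \<and> (int n + 6)\<^sup>2 < 6 * int (card (qh_tri n)) + 12"
proof -
  define r where "r = int (n div 6) + 1"
  have r: "1 \<le> r"
    by (simp add: r_def)
  have n: "int n = 6 * r - 6 + int (n mod 6)"
    by (simp add: r_def zdiv_int zmod_int)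
  have Q: "qh_tri n = qh_hexagon r (n mod 6)"
    by (simp add: qh_tri_def r_def)
  have "n mod 6 < 6"
    by simp
  then consider "n mod 6 = 0" | "n mod 6 = 1" | "n mod 6 = 2" | "n mod 6 = 3" | "n mod 6 = 4" | "n mod 6 = 5"
    by linarith
  then show ?thesis
    using card_qh_hexagon[OF r] r unfolding Q n
    by cases (simp_all add: power2_eq_square algebra_simps)
qed

section \<open>The minimal perimeter\<close>

lemma polyiamondE:
  assumes "polyiamond P"
  obtains M where "P = face_of ` M" "M \<subseteq> {f. valid_tri f}" "finite M" "M \<noteq> {}" "connected_wrt tri_adj M"
proof -
  have "P = face_of ` {f. valid_tri f \<and> face_of f \<in> P}"
    using assms subset_faces_eq_image by (simp add: polyiamond_def)
  then show ?thesis
    using assms polyiamond_face_of[of "{f. valid_tri f \<and> face_of f \<in> P}"] that by auto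
qed

lemma isoperimetric_polyiamond: "polyiamond P \<Longrightarrow> 6 * int (area P) \<le> (int (edge_perimeter P))\<^sup>2"
  by (elim polyiamondE) (simp add: area_face_of edge_perimeter_face_of isoperimetric_inequality)

lemma even_edge_perimeter_add_area: "polyiamond P \<Longrightarrow> even (edge_perimeter P + area P)"
  by (elim polyiamondE) (simp only: area_face_of edge_perimeter_face_of even_tri_perim_add_card)

lemma area_qh_seq: "area (qh_seq n) = card (qh_tri n)"
  by (simp add: qh_seq_eq_face_of area_face_of qh_tri_valid)

lemma edge_perimeter_qh_seq: "edge_perimeter (qh_seq n) = n + 6"
  using qh_tri_perim_connected by (simp add: qh_seq_eq_face_of edge_perimeter_face_of qh_tri_valid)

lemma polyiamond_qh_seq: "polyiamond (qh_seq n)"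
proof -
  have "qh_tri n \<noteq> {}"
    using card_qh_tri_bounds[of n] by (auto simp: power2_eq_square)
  then show ?thesis
    using qh_tri_perim_connected by (simp add: qh_seq_eq_face_of polyiamond_face_of qh_tri_valid)
qed

text \<open>A perimeter p with 6 A \<le> p^2 is at least N; it has the parity of N + (A - a), and for
  A - a even and positive, p = N would give 6 A \<le> N^2 < 6 a + 12 \<le> 6 A.\<close>
lemma perimeter_bound_arith:
  fixes p N a A :: int
  assumes "6 * A \<le> p\<^sup>2" "0 \<le> p" "even (p + A)" "even (N + a)" "(N - 1)\<^sup>2 < 6 * a" "N\<^sup>2 < 6 * a + 12" "a \<le> A"
  shows "N + (if A - a > 0 then 1 else 0) + (if A - a > 0 \<and> even (A - a) then 1 else 0) \<le> p"
proof -
  have "N \<le> p"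
  proof (rule ccontr)
    assume "\<not> N \<le> p"
    then have "p\<^sup>2 \<le> (N - 1)\<^sup>2"
      using assms(2) by (simp add: power_mono)
    then show False
      using assms(1,5,7) by linarith
  qed
  moreover have "even ((p - N) - (A - a))"
    using assms(3,4) by presburger
  moreover have "p \<noteq> N" if "A - a \<ge> 2"
    using that assms(1,6) by auto
  ultimately show ?thesis
    by (cases "A - a > 0"; cases "even (A - a)") presburger+
qed

lemma edge_perimeter_lower_bound:
  assumes "polyiamond P" "area (qh_seq n) \<le> area P" "k = area P - area (qh_seq n)"
  shows "edge_perimeter (qh_seq n) + (if k > 0 then 1 else 0) + (if k > 0 \<and> even k then 1 else 0)
    \<le> edge_perimeter P"
proof -
  have "int (edge_perimeter (qh_seq n)) + (if int k > 0 then 1 else 0) + (if int k > 0 \<and> even (int k) then 1 else 0)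
      \<le> int (edge_perimeter P)"
    using perimeter_bound_arith[of "int (area P)" "int (edge_perimeter P)" "int n + 6" "int (area (qh_seq n))"]
      isoperimetric_polyiamond[OF assms(1)] even_edge_perimeter_add_area[OF assms(1)]
      even_edge_perimeter_add_area[OF polyiamond_qh_seq[of n]] card_qh_tri_bounds[of n] assms(2,3)
    by (simp add: edge_perimeter_qh_seq area_qh_seq of_nat_diff add.commute flip: of_nat_add)
  then show ?thesis
    by (cases "k > 0"; cases "even k") auto
qed

lemma sym_image_translation:
  "sym_image (\<lambda>(x, y). (x + a, y + b)) (face_of ` M) = face_of ` tri_shift a b ` M"
proof -
  have "(\<lambda>(x, y). (x + a, y + b)) ` face_of f = face_of (tri_shift a b f)" for f
    by (cases f) (auto simp: face_of_def tri_shift_def up_face_def down_face_def)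
  then show ?thesis
    unfolding sym_image_def by (simp add: image_image)
qed

lemma lattice_sym_translation: "lattice_sym (\<lambda>(x, y). (x + a, y + b))"
  unfolding lattice_sym_def by (intro exI[of _ 0] exI[of _ a] exI[of _ b]) simp

lemma standard_polyiamond:
  assumes "area (qh_seq n) \<le> A" "A < area (qh_seq (Suc n))" "k = A - area (qh_seq n)"
  shows "\<exists>P g. polyiamond P \<and> area P = A \<and> lattice_sym g
            \<and> qh_seq n \<subseteq> P \<and> P \<subseteq> sym_image g (qh_seq (Suc n))
            \<and> edge_connected (P - qh_seq n)
            \<and> P - qh_seq n \<noteq> sym_image g (qh_seq (Suc n)) - qh_seq n
            \<and> edge_perimeter P = edge_perimeter (qh_seq n) + (if k > 0 then 1 else 0)
                 + (if k > 0 \<and> even k then 1 else 0)"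
proof -
  let ?Q = "qh_tri n"
  have "connected_wrt tri_adj ?Q"
    using qh_tri_perim_connected by blast
  moreover have Q_ne: "?Q \<noteq> {}"
    using polyiamond_qh_seq[of n] by (auto simp: polyiamond_def qh_seq_eq_face_of)
  moreover have "k < card (qh_tri (Suc n)) - card ?Q"
    using assms by (simp add: area_qh_seq)
  ultimately obtain M a b where M: "M \<subseteq> {f. valid_tri f}" "finite M" "connected_wrt tri_adj M" "card M = card ?Q + k"
    "?Q \<subseteq> M" "M \<subseteq> tri_shift a b ` qh_tri (Suc n)" "connected_wrt tri_adj (M - ?Q)"
    "M - ?Q \<noteq> tri_shift a b ` qh_tri (Suc n) - ?Q"
    "tri_perim M = tri_perim ?Q + (if k = 0 then 0 else if odd k then 1 else 2)"
    using grows_by_bar_partial[OF qh_tri_grows_by_bar] by metis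
  have valid: "tri_shift a b ` qh_tri (Suc n) \<subseteq> {f. valid_tri f}"
    using tri_automorphism_image_valid[OF tri_automorphism_tri_shift qh_tri_valid] .
  show ?thesis
  proof (intro exI[of _ "face_of ` M"] exI[of _ "\<lambda>(x, y). (x + a, y + b)"] conjI)
    show "polyiamond (face_of ` M)" "area (face_of ` M) = A"
      using M Q_ne assms(1,3) by (auto simp: polyiamond_face_of area_face_of area_qh_seq)
    show "lattice_sym (\<lambda>(x, y). (x + a, y + b))"
      by (rule lattice_sym_translation)
    show "qh_seq n \<subseteq> face_of ` M" "face_of ` M \<subseteq> sym_image (\<lambda>(x, y). (x + a, y + b)) (qh_seq (Suc n))"
      using M by (auto simp: qh_seq_eq_face_of sym_image_translation)
    show "edge_connected (face_of ` M - qh_seq n)"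
      unfolding qh_seq_eq_face_of face_of_image_diff[OF M(1) qh_tri_valid, symmetric]
      using M by (subst edge_connected_face_of) auto
    have "face_of ` (M - ?Q) \<noteq> face_of ` (tri_shift a b ` qh_tri (Suc n) - ?Q)"
      using M(1,8) valid by (subst inj_on_image_eq_iff[OF inj_on_face_of]) auto
    then show "face_of ` M - qh_seq n \<noteq> sym_image (\<lambda>(x, y). (x + a, y + b)) (qh_seq (Suc n)) - qh_seq n"
      unfolding face_of_image_diff[OF M(1) qh_tri_valid] face_of_image_diff[OF valid qh_tri_valid] by (simp add: qh_seq_eq_face_of sym_image_translation)
    show "edge_perimeter (face_of ` M) = edge_perimeter (qh_seq n) + (if k > 0 then 1 else 0)
        + (if k > 0 \<and> even k then 1 else 0)"
      using M qh_tri_valid by (auto simp: edge_perimeter_face_of qh_seq_eq_face_of)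
  qed
qed

theorem theorem3p16:
  fixes A n k :: nat
  assumes "A \<ge> 6"
    and "area (qh_seq n) \<le> A" and "A < area (qh_seq (Suc n))"
    and "k = A - area (qh_seq n)"
  shows "(\<forall>P. polyiamond P \<and> area P = A \<longrightarrow>
            edge_perimeter (qh_seq n) + (if k > 0 then 1 else 0)
              + (if k > 0 \<and> even k then 1 else 0) \<le> edge_perimeter P)
       \<and> (\<exists>P g. polyiamond P \<and> area P = A \<and> lattice_sym g
            \<and> qh_seq n \<subseteq> P \<and> P \<subseteq> sym_image g (qh_seq (Suc n))
            \<and> edge_connected (P - qh_seq n)
            \<and> P - qh_seq n \<noteq> sym_image g (qh_seq (Suc n)) - qh_seq n
            \<and> edge_perimeter P = edge_perimeter (qh_seq n) + (if k > 0 then 1 else 0)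
                 + (if k > 0 \<and> even k then 1 else 0))"
proof (intro conjI allI impI)
  fix P assume "polyiamond P \<and> area P = A"
  then show "edge_perimeter (qh_seq n) + (if k > 0 then 1 else 0) + (if k > 0 \<and> even k then 1 else 0)
      \<le> edge_perimeter P"
    using edge_perimeter_lower_bound[of P n k] assms(2,4) by auto
qed (rule standard_polyiamond[OF assms(2-4)])

end
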